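(* Let $C\subset\mathbb{E}^{2,1}$ be a crooked plane, and regard $\mathbb{E}^{2,1}$ as a Minkowski patch in the Einstein universe $\operatorname{Ein}^{2,1}$ via the conformal embedding $\mathcal E$ described in the context. Then the closure $\overline{C}$ of $\mathcal E(C)$ in $\operatorname{Ein}^{2,1}$ is a topological submanifold of $\operatorname{Ein}^{2,1}$ homeomorphic to a Klein bottle. Moreover, the preimage (lift) of $\overline{C}$ in the double covering $\widehat{\operatorname{Ein}}^{2,1}$ is the orientation double covering of $\overline{C}$ and is homeomorphic to a torus.
   Context: Let $\mathbb{R}^{3,2}$ be $\mathbb{R}^5$ with the symmetric bilinear form $\langle u,v\rangle=u_1v_1+u_2v_2-u_3v_3-\tfrac12 u_4v_5-\tfrac12 u_5v_4$ (type $(3,2)$). The Einstein universe $\operatorname{Ein}^{2,1}$ is the image in $\mathbb{RP}^4$ of the nullcone $\{v\neq 0:\langle v,v\rangle=0\}$; its double covering $\widehat{\operatorname{Ein}}^{2,1}$ is the quotient of the nonzero null vectors by positive scalars. Minkowski space $\mathbb{E}^{2,1}$ is the affine space with translation space $\mathbb{R}^{2,1}$, i.e. $\mathbb{R}^3$ with $\langle x,y\rangle=x_1y_1+x_2y_2-x_3y_3$; it embeds conformally in $\operatorname{Ein}^{2,1}$ by $\mathcal E(x)=[x:\langle x,x\rangle:1]$ (the complement of the image is the lightcone of the point $[0:0:0:1:0]$). Fix an orientation of $\mathbb{R}^{2,1}$ (via $\det$). For a lightlike geodesic $\ell=p+\mathbb{R}v$ ($v$ null), $\ell^\perp:=p+v^\perp$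 is the null plane containing it; choosing a timelike $u$ with $\langle u,v\rangle<0$, set $\mathcal W^{\pm}(\ell)=\{p+w\in\ell^\perp:\pm\det(u,v,w)>0\}$ (independent of choices). Given a point $p$ and two distinct lightlike geodesics $\ell_1,\ell_2$ through $p$, the stem is $\mathcal S(\ell_1,\ell_2)=\{p+w: w\in\operatorname{span}(\ell_1-p,\ell_2-p),\ \langle w,w\rangle\le 0\}$ (the intersection of the causal future and past of $p$ with the timelike plane through $\ell_1,\ell_2$). A crooked plane with vertex $p$ is either $\mathcal W^+(\ell_1)\cup\mathcal S(\ell_1,\ell_2)\cup\mathcal W^+(\ell_2)$ (positively oriented) or $\mathcal W^-(\ell_1)\cup\mathcal S(\ell_1,\ell_2)\cup\mathcal W^-(\ell_2)$ (negatively oriented), for some such $p,\ell_1,\ell_2$. *)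

theory Defs
  imports "HOL-Analysis.Analysis"
begin

definition quot_topology :: "'a topology \<Rightarrow> ('a \<Rightarrow> 'b) \<Rightarrow> 'b topology" where
  "quot_topology X f = topology (\<lambda>U. U \<subseteq> f ` topspace X \<and> openin X {x \<in> topspace X. f x \<in> U})"

definition covering_map :: "'a topology \<Rightarrow> 'b topology \<Rightarrow> ('a \<Rightarrow> 'b) \<Rightarrow> bool" where
  "covering_map X Y p \<longleftrightarrow>
     continuous_map X Y p \<and> p ` topspace X = topspace Y \<and>
     (\<forall>y \<in> topspace Y. \<exists>T. y \<in> T \<and> openin Y T \<and>
        (\<exists>v. \<Union>v = {x \<in> topspace X. p x \<in> T} \<and>
             (\<forall>u \<in> v. openin X u) \<and> pairwise disjnt v \<and>
             (\<forall>u \<in> v. \<exists>q. homeomorphic_maps (subtopology X u) (subtopology Y T) p q)))"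

definition double_covering_map :: "'a topology \<Rightarrow> 'b topology \<Rightarrow> ('a \<Rightarrow> 'b) \<Rightarrow> bool" where
  "double_covering_map X Y p \<longleftrightarrow> covering_map X Y p \<and>
     (\<forall>y \<in> topspace Y. card {x \<in> topspace X. p x = y} = 2)"

definition torus :: "(complex \<times> complex) topology" where
  "torus = prod_topology (top_of_set (sphere 0 1)) (top_of_set (sphere 0 1))"

text \<open>Klein bottle: R^2 modulo the group generated by (s,t) -> (s+1,t) and (s,t) -> (-s,t+1),
  i.e. the maps (s,t) -> ((-1)^n s + m, t + n), m,n integers.  Points are the orbits.\<close>
definition klein_orbit :: "real \<times> real \<Rightarrow> (real \<times> real) set" where
  "klein_orbit z = {((-1) powi n * fst z + of_int m, snd z + of_int n) | m n :: int. True}"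

definition klein_bottle :: "(real \<times> real) set topology" where
  "klein_bottle = quot_topology (euclidean :: (real \<times> real) topology) klein_orbit"

definition mink :: "real^3 \<Rightarrow> real^3 \<Rightarrow> real" where
  "mink x y = x$1 * y$1 + x$2 * y$2 - x$3 * y$3"

definition det3 :: "real^3 \<Rightarrow> real^3 \<Rightarrow> real^3 \<Rightarrow> real" where
  "det3 u v w = det (vector [u, v, w] :: real^3^3)"

definition lightlike :: "real^3 \<Rightarrow> bool" where
  "lightlike v \<longleftrightarrow> v \<noteq> 0 \<and> mink v v = 0"

definition timelike :: "real^3 \<Rightarrow> bool" where
  "timelike u \<longleftrightarrow> mink u u < 0"

definition geod :: "real^3 \<Rightarrow> real^3 \<Rightarrow> (real^3) set" where
  "geod p v = {p + t *\<^sub>R v | t. True}"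

text \<open>Wings W^+ and W^- of the lightlike geodesic p + R v (for every admissible timelike u;
  the sign is independent of the choice of u).\<close>
definition wing_plus :: "real^3 \<Rightarrow> real^3 \<Rightarrow> (real^3) set" where
  "wing_plus p v = {p + w | w. mink w v = 0 \<and>
      (\<forall>u. timelike u \<and> mink u v < 0 \<longrightarrow> det3 u v w > 0)}"

definition wing_minus :: "real^3 \<Rightarrow> real^3 \<Rightarrow> (real^3) set" where
  "wing_minus p v = {p + w | w. mink w v = 0 \<and>
      (\<forall>u. timelike u \<and> mink u v < 0 \<longrightarrow> det3 u v w < 0)}"

definition stem :: "real^3 \<Rightarrow> real^3 \<Rightarrow> real^3 \<Rightarrow> (real^3) set" where
  "stem p v1 v2 = {p + w | w. w \<in> span {v1, v2} \<and> mink w w \<le> 0}"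

definition crooked_plane :: "(real^3) set \<Rightarrow> bool" where
  "crooked_plane C \<longleftrightarrow> (\<exists>p v1 v2. lightlike v1 \<and> lightlike v2 \<and> geod p v1 \<noteq> geod p v2 \<and>
     (C = wing_plus p v1 \<union> stem p v1 v2 \<union> wing_plus p v2 \<or>
      C = wing_minus p v1 \<union> stem p v1 v2 \<union> wing_minus p v2))"

definition form32 :: "real^5 \<Rightarrow> real^5 \<Rightarrow> real" where
  "form32 u v = u$1 * v$1 + u$2 * v$2 - u$3 * v$3 - 1/2 * u$4 * v$5 - 1/2 * u$5 * v$4"

definition nullcone :: "(real^5) set" where
  "nullcone = {v. v \<noteq> 0 \<and> form32 v v = 0}"

definition ein_pt :: "real^5 \<Rightarrow> (real^5) set" where
  "ein_pt v = {c *\<^sub>R v | c. c \<noteq> 0}"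

definition einhat_pt :: "real^5 \<Rightarrow> (real^5) set" where
  "einhat_pt v = {c *\<^sub>R v | c. c > 0}"

definition Ein :: "(real^5) set topology" where
  "Ein = quot_topology (top_of_set nullcone) ein_pt"

definition EinHat :: "(real^5) set topology" where
  "EinHat = quot_topology (top_of_set nullcone) einhat_pt"

definition ein_cover :: "(real^5) set \<Rightarrow> (real^5) set" where
  "ein_cover S = {c *\<^sub>R v | c v. v \<in> S \<and> c \<noteq> 0}"

definition ein_embed :: "real^3 \<Rightarrow> (real^5) set" where
  "ein_embed x = ein_pt (vector [x$1, x$2, x$3, mink x x, 1])"

end

theory Submission
  imports Defs
begin

text \<open>At the vertex p of the crooked plane choose a null frame: null vectors f1, f2 spanning the
  stem with \<langle>f1, f2\<rangle> = -1/2 and a unit spacelike n orthogonal to both. In the induced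
  coordinates of \<real>^(3,2) the form becomes m4^2 - m1 m5 - m2 m3, the crooked plane consists of the
  null vectors with m1 \<noteq> 0 satisfying one of three sign conditions (two wings and the stem), and
  its closure in Ein consists of the lines of the closed cone M cut out by the same conditions
  without m1 \<noteq> 0. An explicit continuous map of the torus S^1 \<times> S^1 meets every ray of M exactly
  once, and the involution (c, s, g, h) \<mapsto> (-c, -s, -g, h) of the torus corresponds to the sign
  change on M. Hence the rays of M, i.e. the lift of the closure to the double cover, form a torus
  and the lines form its quotient by a free involution, a Klein bottle; compactness and the
  Hausdorff property turn the continuous bijections into homeomorphisms. The covering statement is
  the restriction of the double covering of Ein, which over the lines not orthogonal to a fixed
  vector w0 is trivialised by the sign of the inner product with w0.\<close>

section \<open>Quotient topologies and covering maps\<close>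

lemma istopology_quot:
  "istopology (\<lambda>U. U \<subseteq> f ` topspace X \<and> openin X {x \<in> topspace X. f x \<in> U})"
proof -
  have Int: "openin X {x \<in> topspace X. f x \<in> S \<inter> T}"
    if "openin X {x \<in> topspace X. f x \<in> S}" "openin X {x \<in> topspace X. f x \<in> T}" for S T
  proof -
    have "{x \<in> topspace X. f x \<in> S \<inter> T} = {x \<in> topspace X. f x \<in> S} \<inter> {x \<in> topspace X. f x \<in> T}" by auto
    then show ?thesis using that by auto
  qed
  have Union: "openin X {x \<in> topspace X. f x \<in> \<Union>K}"
    if "\<forall>S\<in>K. openin X {x \<in> topspace X. f x \<in> S}" for K
  proof -
    have "{x \<in> topspace X. f x \<in> \<Union>K} = (\<Union>S\<in>K. {x \<in> topspace X. f x \<in> S})" by auto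
    then show ?thesis using that by auto
  qed
  show ?thesis unfolding istopology_def using Int Union by blast
qed

lemma openin_quot:
  "openin (quot_topology X f) U \<longleftrightarrow> U \<subseteq> f ` topspace X \<and> openin X {x \<in> topspace X. f x \<in> U}"
  unfolding quot_topology_def by (simp add: topology_inverse'[OF istopology_quot])

lemma topspace_quot [simp]: "topspace (quot_topology X f) = f ` topspace X"
proof -
  have "openin (quot_topology X f) (f ` topspace X)"
    unfolding openin_quot by (auto intro: openin_subopen[THEN iffD2])
  then have "f ` topspace X \<subseteq> topspace (quot_topology X f)"
    by (rule openin_subset)
  moreover have "topspace (quot_topology X f) \<subseteq> f ` topspace X"
    using openin_quot[of X f "topspace (quot_topology X f)"] by auto
  ultimately show ?thesis by auto
qed

lemma quotient_map_quot: "quotient_map X (quot_topology X f) f"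
  unfolding quotient_map_def openin_quot by auto

lemma Hausdorff_space_quotient_map_invariant:
  assumes f: "quotient_map X Y f" and h: "continuous_map X Z h" and Z: "Hausdorff_space Z"
    and fibres: "\<And>x y. x \<in> topspace X \<Longrightarrow> y \<in> topspace X \<Longrightarrow> f x = f y \<longleftrightarrow> h x = h y"
  shows "Hausdorff_space Y"
proof -
  obtain g where g: "continuous_map Y Z g" and gf: "\<And>x. x \<in> topspace X \<Longrightarrow> g (f x) = h x"
    using quotient_map_lift_exists[OF f h] fibres by metis
  have "inj_on g (f ` topspace X)"
    using gf fibres by (auto simp: inj_on_def)
  then have "inj_on g (topspace Y)"
    using quotient_imp_surjective_map[OF f] by simp
  then show ?thesis
    using Hausdorff_space_injective_preimage[OF Z g] by blast
qed

lemma compact_Hausdorff_bijection_homeomorphic_space: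
  assumes "continuous_map X Y f" and "compact_space X" and "Hausdorff_space Y"
    and "f ` topspace X = topspace Y" and "inj_on f (topspace X)"
  shows "Y homeomorphic_space X"
  using assms bijective_closed_imp_homeomorphic_map continuous_imp_closed_map
    homeomorphic_map_imp_homeomorphic_space homeomorphic_space_sym by metis

lemma homeomorphic_maps_restrict_preimage:
  assumes q: "homeomorphic_maps (subtopology X u) (subtopology Y T) p q"
  shows "homeomorphic_maps (subtopology X ({x \<in> topspace X. p x \<in> S} \<inter> u)) (subtopology Y (S \<inter> T)) p q"
proof -
  have "p ` (topspace X \<inter> u) = topspace Y \<inter> T"
    using homeomorphic_imp_surjective_map[OF homeomorphic_maps_imp_map[OF q]] by simp
  then have "p ` (topspace (subtopology X u) \<inter> {x \<in> topspace X. p x \<in> S}) = topspace (subtopology Y T) \<inter> S"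
    by auto
  from homeomorphic_maps_subtopologies[OF q this] show ?thesis
    unfolding subtopology_subtopology by (metis Int_commute Int_left_commute Int_absorb)
qed

lemma covering_map_restrict_preimage:
  assumes p: "covering_map X Y p" and S: "S \<subseteq> topspace Y"
  defines "A \<equiv> {x \<in> topspace X. p x \<in> S}"
  shows "covering_map (subtopology X A) (subtopology Y S) p"
  unfolding covering_map_def
proof (intro conjI ballI)
  have cont: "continuous_map X Y p" and surj: "p ` topspace X = topspace Y"
    using p unfolding covering_map_def by auto
  show "continuous_map (subtopology X A) (subtopology Y S) p"
    using cont unfolding A_def continuous_map_in_subtopology
    by (auto intro: continuous_map_from_subtopology)
  show "p ` topspace (subtopology X A) = topspace (subtopology Y S)"
    using surj S unfolding A_def by auto
  fix y assume yS: "y \<in> topspace (subtopology Y S)"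
  then obtain T v where yT: "y \<in> T" and T: "openin Y T" and v: "\<Union>v = {x \<in> topspace X. p x \<in> T}"
    and v_open: "\<forall>u\<in>v. openin X u" and v_disj: "pairwise disjnt v"
    and v_homeo: "\<forall>u\<in>v. \<exists>q. homeomorphic_maps (subtopology X u) (subtopology Y T) p q"
    using p unfolding covering_map_def by auto
  have sheet: "\<exists>q. homeomorphic_maps (subtopology (subtopology X A) (A \<inter> u))
                                      (subtopology (subtopology Y S) (S \<inter> T)) p q"
    if u: "u \<in> v" for u
  proof -
    obtain q where q: "homeomorphic_maps (subtopology X u) (subtopology Y T) p q"
      using v_homeo u by blast
    have "homeomorphic_maps (subtopology X (A \<inter> u)) (subtopology Y (S \<inter> T)) p q"
      unfolding A_def by (rule homeomorphic_maps_restrict_preimage[OF q])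
    then show ?thesis
      unfolding subtopology_subtopology Int_left_absorb by blast
  qed
  show "\<exists>T. y \<in> T \<and> openin (subtopology Y S) T \<and>
          (\<exists>v. \<Union>v = {x \<in> topspace (subtopology X A). p x \<in> T} \<and>
               (\<forall>u\<in>v. openin (subtopology X A) u) \<and> pairwise disjnt v \<and>
               (\<forall>u\<in>v. \<exists>q. homeomorphic_maps (subtopology (subtopology X A) u)
                                              (subtopology (subtopology Y S) T) p q))"
  proof (intro exI conjI)
    show "y \<in> S \<inter> T" using yT yS by simp
    show "openin (subtopology Y S) (S \<inter> T)" using T by (rule openin_subtopology_Int2)
    show "\<Union>((\<inter>) A ` v) = {x \<in> topspace (subtopology X A). p x \<in> S \<inter> T}"
      using v unfolding A_def by auto
    show "\<forall>u\<in>(\<inter>) A ` v. openin (subtopology X A) u"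
      using v_open by (auto intro: openin_subtopology_Int2)
    show "pairwise disjnt ((\<inter>) A ` v)"
      using v_disj unfolding pairwise_def disjnt_def by blast
    show "\<forall>u\<in>(\<inter>) A ` v. \<exists>q. homeomorphic_maps (subtopology (subtopology X A) u)
                                              (subtopology (subtopology Y S) (S \<inter> T)) p q"
      using sheet by blast
  qed
qed

lemma double_covering_map_restrict_preimage:
  assumes p: "double_covering_map X Y p" and S: "S \<subseteq> topspace Y"
  shows "double_covering_map (subtopology X {x \<in> topspace X. p x \<in> S}) (subtopology Y S) p"
proof -
  have "{x \<in> topspace X. p x \<in> S \<and> p x = y} = {x \<in> topspace X. p x = y}" if "y \<in> S" for y
    using that by auto
  then show ?thesis
    using p S covering_map_restrict_preimage[of X Y p S]
    unfolding double_covering_map_def by auto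
qed

lemma exhaust_5:
  fixes x :: 5
  shows "x = 1 \<or> x = 2 \<or> x = 3 \<or> x = 4 \<or> x = 5"
proof (induct x)
  case (of_int z)
  then have "z = 0 \<or> z = 1 \<or> z = 2 \<or> z = 3 \<or> z = 4" by fastforce
  then show ?case by auto
qed

lemma forall_5: "(\<forall>i::5. P i) \<longleftrightarrow> P 1 \<and> P 2 \<and> P 3 \<and> P 4 \<and> P 5"
  by (metis exhaust_5)

lemma vec5_eq_iff: "(x::real^5) = y \<longleftrightarrow> x$1 = y$1 \<and> x$2 = y$2 \<and> x$3 = y$3 \<and> x$4 = y$4 \<and> x$5 = y$5"
  by (simp add: vec_eq_iff forall_5)

lemma vec3_eq_iff: "(x::real^3) = y \<longleftrightarrow> x$1 = y$1 \<and> x$2 = y$2 \<and> x$3 = y$3"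
  by (simp add: vec_eq_iff forall_3)

lemma vector_5 [simp]:
  "(vector [a, b, c, d, e] :: ('a::zero)^5)$1 = a"
  "(vector [a, b, c, d, e] :: ('a::zero)^5)$2 = b"
  "(vector [a, b, c, d, e] :: ('a::zero)^5)$3 = c"
  "(vector [a, b, c, d, e] :: ('a::zero)^5)$4 = d"
  "(vector [a, b, c, d, e] :: ('a::zero)^5)$5 = e"
  unfolding vector_def by simp_all

lemma det3_expand:
  "det3 u v w = u$1 * v$2 * w$3 - u$1 * v$3 * w$2 - u$2 * v$1 * w$3
              + u$2 * v$3 * w$1 + u$3 * v$1 * w$2 - u$3 * v$2 * w$1"
  unfolding det3_def det_3 by (simp add: algebra_simps)

lemma det3_linear:
  "det3 (x + y) v w = det3 x v w + det3 y v w"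
  "det3 u (x + y) w = det3 u x w + det3 u y w"
  "det3 u v (x + y) = det3 u v x + det3 u v y"
  "det3 (a *\<^sub>R x) v w = a * det3 x v w"
  "det3 u (a *\<^sub>R x) w = a * det3 u x w"
  "det3 u v (a *\<^sub>R x) = a * det3 u v x"
  "det3 x x w = 0" "det3 x v x = 0" "det3 u x x = 0"
  unfolding det3_expand by (simp_all add: algebra_simps)

lemma det3_swap12: "det3 v u w = - det3 u v w"
  unfolding det3_expand by (simp add: algebra_simps)

lemma det3_uminus: "det3 u v (- w) = - det3 u v w" "det3 (- u) v w = - det3 u v w"
  unfolding det3_expand by simp_all

lemma mink_sym: "mink x y = mink y x"
  unfolding mink_def by (simp add: algebra_simps)

lemma mink_linear:
  "mink (x + y) z = mink x z + mink y z" "mink z (x + y) = mink z x + mink z y"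
  "mink (x - y) z = mink x z - mink y z" "mink z (x - y) = mink z x - mink z y"
  "mink (a *\<^sub>R x) z = a * mink x z" "mink z (a *\<^sub>R x) = a * mink z x"
  "mink (- x) z = - mink x z" "mink z (- x) = - mink z x"
  unfolding mink_def by (simp_all add: algebra_simps)

section \<open>The Einstein universe and its double cover\<close>

lemma nullcone_nonzero: "w \<in> nullcone \<Longrightarrow> w \<noteq> 0"
  unfolding nullcone_def by auto

lemma nullcone_scaleR:
  assumes "w \<in> nullcone" and "a \<noteq> 0"
  shows "a *\<^sub>R w \<in> nullcone"
proof -
  have "form32 (a *\<^sub>R w) (a *\<^sub>R w) = a\<^sup>2 * form32 w w"
    unfolding form32_def by (simp add: algebra_simps power2_eq_square)
  then show ?thesis using assms unfolding nullcone_def by simp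
qed

lemma ein_pt_scaleR: "a \<noteq> 0 \<Longrightarrow> ein_pt (a *\<^sub>R w) = ein_pt w"
  unfolding ein_pt_def
proof (intro equalityI subsetI)
  fix x assume a: "a \<noteq> 0"
  { assume "x \<in> {c *\<^sub>R a *\<^sub>R w |c. c \<noteq> 0}"
    then obtain c where "c \<noteq> 0" "x = c *\<^sub>R a *\<^sub>R w" by auto
    then show "x \<in> {c *\<^sub>R w |c. c \<noteq> 0}" using a by (intro CollectI exI[of _ "c * a"]) auto }
  { assume "x \<in> {c *\<^sub>R w |c. c \<noteq> 0}"
    then obtain c where "c \<noteq> 0" "x = c *\<^sub>R w" by auto
    then show "x \<in> {c *\<^sub>R a *\<^sub>R w |c. c \<noteq> 0}" using a by (intro CollectI exI[of _ "c / a"]) auto }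
qed

lemma einhat_pt_scaleR: "a > 0 \<Longrightarrow> einhat_pt (a *\<^sub>R w) = einhat_pt w"
  unfolding einhat_pt_def
proof (intro equalityI subsetI)
  fix x assume a: "a > 0"
  { assume "x \<in> {c *\<^sub>R a *\<^sub>R w |c. c > 0}"
    then obtain c where "c > 0" "x = c *\<^sub>R a *\<^sub>R w" by auto
    then show "x \<in> {c *\<^sub>R w |c. c > 0}" using a by (intro CollectI exI[of _ "c * a"]) auto }
  { assume "x \<in> {c *\<^sub>R w |c. c > 0}"
    then obtain c where "c > 0" "x = c *\<^sub>R w" by auto
    then show "x \<in> {c *\<^sub>R a *\<^sub>R w |c. c > 0}" using a by (intro CollectI exI[of _ "c / a"]) auto }
qed

lemma ein_pt_eq_iff: "ein_pt w = ein_pt w' \<longleftrightarrow> (\<exists>a. a \<noteq> 0 \<and> w' = a *\<^sub>R w)"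
proof
  assume "ein_pt w = ein_pt w'"
  moreover have "w' \<in> ein_pt w'"
    unfolding ein_pt_def by (auto intro: exI[of _ 1])
  ultimately show "\<exists>a. a \<noteq> 0 \<and> w' = a *\<^sub>R w"
    unfolding ein_pt_def by auto
qed (auto simp: ein_pt_scaleR)

lemma einhat_pt_eq_iff: "einhat_pt w = einhat_pt w' \<longleftrightarrow> (\<exists>a. a > 0 \<and> w' = a *\<^sub>R w)"
proof
  assume "einhat_pt w = einhat_pt w'"
  moreover have "w' \<in> einhat_pt w'"
    unfolding einhat_pt_def by (auto intro: exI[of _ 1])
  ultimately show "\<exists>a. a > 0 \<and> w' = a *\<^sub>R w"
    unfolding einhat_pt_def by auto
qed (auto simp: einhat_pt_scaleR)

lemma ein_cover_einhat_pt [simp]: "ein_cover (einhat_pt w) = ein_pt w"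
proof
  show "ein_cover (einhat_pt w) \<subseteq> ein_pt w"
  proof
    fix x assume "x \<in> ein_cover (einhat_pt w)"
    then obtain c d where "c \<noteq> 0" "d > 0" "x = (c * d) *\<^sub>R w"
      unfolding ein_cover_def einhat_pt_def by auto
    then show "x \<in> ein_pt w"
      unfolding ein_pt_def by (intro CollectI exI[of _ "c * d"]) auto
  qed
  have "w \<in> einhat_pt w"
    unfolding einhat_pt_def by (auto intro: exI[of _ 1])
  then show "ein_pt w \<subseteq> ein_cover (einhat_pt w)"
    unfolding ein_cover_def ein_pt_def by blast
qed

lemma topspace_Ein: "topspace Ein = ein_pt ` nullcone"
  unfolding Ein_def by simp

lemma topspace_EinHat: "topspace EinHat = einhat_pt ` nullcone"
  unfolding EinHat_def by simp

lemma quotient_map_Ein: "quotient_map (top_of_set nullcone) Ein ein_pt"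
  unfolding Ein_def by (rule quotient_map_quot)

lemma quotient_map_EinHat: "quotient_map (top_of_set nullcone) EinHat einhat_pt"
  unfolding EinHat_def by (rule quotient_map_quot)

lemma continuous_map_ein_cover: "continuous_map EinHat Ein ein_cover"
proof (rule continuous_compose_quotient_map[OF quotient_map_EinHat])
  show "continuous_map (top_of_set nullcone) Ein (ein_cover \<circ> einhat_pt)"
    using quotient_imp_continuous_map[OF quotient_map_Ein] by (simp add: o_def)
qed

lemma ein_pt_uminus: "ein_pt (- w) = ein_pt w"
  using ein_pt_scaleR[of "-1" w] by simp

definition line_projection :: "real^5 \<Rightarrow> real^5^5" where
  "line_projection w = (\<chi> i j. w$i * w$j / (norm w)\<^sup>2)"

lemma line_projection_scaleR:
  assumes "a \<noteq> 0"
  shows "line_projection (a *\<^sub>R w) = line_projection w"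
proof -
  have "(a * x) * (a * y) / (a\<^sup>2 * N) = x * y / N" for x y N :: real
  proof -
    have "(a * x) * (a * y) = a\<^sup>2 * (x * y)" by (simp add: power2_eq_square)
    then show ?thesis using assms by (simp add: power2_eq_square)
  qed
  then show ?thesis
    unfolding line_projection_def by (simp add: vec_eq_iff power_mult_distrib)
qed

lemma line_projection_eq_imp_parallel:
  assumes w: "w \<noteq> 0" and w': "w' \<noteq> 0" and eq: "line_projection w = line_projection w'"
  shows "\<exists>a. a \<noteq> 0 \<and> w' = a *\<^sub>R w"
proof -
  obtain i where i: "w$i \<noteq> 0" using w by (metis vec_eq_iff zero_index)
  define N where "N = (norm w)\<^sup>2"
  define N' where "N' = (norm w')\<^sup>2"
  have N: "N > 0" "N' > 0" unfolding N_def N'_def using w w' by auto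
  have e: "w$i * w$j / N = w'$i * w'$j / N'" for j
    using eq unfolding line_projection_def N_def N'_def vec_eq_iff by auto
  then have i': "w'$i \<noteq> 0" using i N e[of i] by auto
  define a where "a = w$i * N' / (N * w'$i)"
  have "w'$j = a * w$j" for j
  proof -
    have "w'$j = (w'$i * w'$j / N') * N' / w'$i" using i' N by auto
    also have "\<dots> = a * w$j" unfolding e[of j, symmetric] a_def using N i' by (simp add: field_simps)
    finally show ?thesis .
  qed
  moreover have "a \<noteq> 0" unfolding a_def using i i' N by auto
  ultimately show ?thesis by (auto simp: vec_eq_iff)
qed

lemma Hausdorff_space_Ein: "Hausdorff_space Ein"
proof (rule Hausdorff_space_quotient_map_invariant[OF quotient_map_Ein _ Hausdorff_space_euclidean])
  show "continuous_map (top_of_set nullcone) euclidean line_projection"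
    unfolding continuous_map_iff_continuous line_projection_def
    by (intro continuous_on_vec_lambda continuous_intros) (auto dest: nullcone_nonzero)
  fix x y assume "x \<in> topspace (top_of_set nullcone)" "y \<in> topspace (top_of_set nullcone)"
  then have nz: "x \<noteq> 0" "y \<noteq> 0" by (auto dest: nullcone_nonzero)
  show "ein_pt x = ein_pt y \<longleftrightarrow> line_projection x = line_projection y"
  proof
    assume "ein_pt x = ein_pt y"
    then obtain a where "a \<noteq> 0" "y = a *\<^sub>R x" by (auto simp: ein_pt_eq_iff)
    then show "line_projection x = line_projection y" by (simp add: line_projection_scaleR)
  next
    assume "line_projection x = line_projection y"
    then obtain a where "a \<noteq> 0" "y = a *\<^sub>R x" using line_projection_eq_imp_parallel nz by blast
    then show "ein_pt x = ein_pt y" by (simp add: ein_pt_scaleR)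
  qed
qed

lemma Hausdorff_space_EinHat: "Hausdorff_space EinHat"
proof (rule Hausdorff_space_quotient_map_invariant[OF quotient_map_EinHat _ Hausdorff_space_euclidean])
  show "continuous_map (top_of_set nullcone) euclidean sgn"
    unfolding continuous_map_iff_continuous
    by (intro continuous_intros) (auto dest: nullcone_nonzero)
  fix x y assume "x \<in> topspace (top_of_set nullcone)" "y \<in> topspace (top_of_set nullcone)"
  then have nz: "norm x > 0" "norm y > 0" by (auto dest: nullcone_nonzero)
  show "einhat_pt x = einhat_pt y \<longleftrightarrow> sgn x = sgn y"
  proof
    assume "einhat_pt x = einhat_pt y"
    then obtain a where "a > 0" "y = a *\<^sub>R x" by (auto simp: einhat_pt_eq_iff)
    then show "sgn x = sgn y" by (simp add: sgn_scaleR)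
  next
    assume eq: "sgn x = sgn y"
    have "y = norm y *\<^sub>R sgn y" using nz by (simp add: sgn_div_norm)
    also have "\<dots> = norm y *\<^sub>R sgn x" using eq by simp
    also have "\<dots> = (norm y / norm x) *\<^sub>R x" by (simp add: sgn_div_norm divide_inverse)
    finally have "y = (norm y / norm x) *\<^sub>R x" .
    moreover have "norm y / norm x > 0" using nz by simp
    ultimately show "einhat_pt x = einhat_pt y"
      unfolding einhat_pt_eq_iff by blast
  qed
qed

text \<open>Local trivialisation of ein_cover: over the open set of lines not orthogonal (in the
  Euclidean sense) to w0, the two sheets are the rays on either side of the hyperplane
  orthogonal to w0, and ray_on_side picks the ray of a line on the given side.\<close>

definition ein_transverse :: "real^5 \<Rightarrow> (real^5) set set" where
  "ein_transverse w0 = ein_pt ` {w \<in> nullcone. inner w w0 \<noteq> 0}"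

definition einhat_side :: "real \<Rightarrow> real^5 \<Rightarrow> (real^5) set set" where
  "einhat_side e w0 = einhat_pt ` {w \<in> nullcone. 0 < e * inner w w0}"

definition ray_on_side :: "real \<Rightarrow> real^5 \<Rightarrow> (real^5) set \<Rightarrow> (real^5) set" where
  "ray_on_side e w0 S = {u \<in> S. 0 < e * inner u w0}"

definition side_rep :: "real \<Rightarrow> real^5 \<Rightarrow> real^5 \<Rightarrow> real^5" where
  "side_rep e w0 w = (e * sgn (inner w w0)) *\<^sub>R w"

lemma preimage_ein_transverse:
  "{w \<in> topspace (top_of_set nullcone). ein_pt w \<in> ein_transverse w0} = {w \<in> nullcone. inner w w0 \<noteq> 0}"
  unfolding ein_transverse_def by (auto simp: ein_pt_eq_iff)

lemma preimage_einhat_side: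
  "{w \<in> topspace (top_of_set nullcone). einhat_pt w \<in> einhat_side e w0} = {w \<in> nullcone. 0 < e * inner w w0}"
proof (intro equalityI subsetI)
  fix w assume "w \<in> {w \<in> topspace (top_of_set nullcone). einhat_pt w \<in> einhat_side e w0}"
  then obtain w' a where w: "w \<in> nullcone" "0 < e * inner w' w0" "a > 0" "w' = a *\<^sub>R w"
    unfolding einhat_side_def by (auto simp: einhat_pt_eq_iff)
  then have "0 < a * (e * inner w w0)" by (simp add: algebra_simps)
  then show "w \<in> {w \<in> nullcone. 0 < e * inner w w0}" using w by (simp add: zero_less_mult_iff)
qed (auto simp: einhat_side_def)

lemma openin_ein_transverse: "openin Ein (ein_transverse w0)"
  unfolding Ein_def openin_quot preimage_ein_transverse
proof
  show "ein_transverse w0 \<subseteq> ein_pt ` topspace (top_of_set nullcone)"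
    unfolding ein_transverse_def by auto
  have "openin (top_of_set nullcone) (nullcone \<inter> {w. inner w w0 \<noteq> 0})"
    by (intro openin_open_Int open_Collect_neq continuous_intros)
  then show "openin (top_of_set nullcone) {w \<in> nullcone. inner w w0 \<noteq> 0}"
    by (simp add: Int_def)
qed

lemma openin_einhat_side: "openin EinHat (einhat_side e w0)"
  unfolding EinHat_def openin_quot preimage_einhat_side
proof
  show "einhat_side e w0 \<subseteq> einhat_pt ` topspace (top_of_set nullcone)"
    unfolding einhat_side_def by auto
  have "openin (top_of_set nullcone) (nullcone \<inter> {w. 0 < e * inner w w0})"
    by (intro openin_open_Int open_Collect_less continuous_intros)
  then show "openin (top_of_set nullcone) {w \<in> nullcone. 0 < e * inner w w0}"
    by (simp add: Int_def)
qed

lemma side_rep: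
  assumes e: "\<bar>e\<bar> = 1" and w: "inner w w0 \<noteq> 0"
  shows "0 < e * inner (side_rep e w0 w) w0"
    and "ein_pt (side_rep e w0 w) = ein_pt w"
    and "w \<in> nullcone \<Longrightarrow> side_rep e w0 w \<in> nullcone"
    and "0 < e * inner w w0 \<Longrightarrow> side_rep e w0 w = w"
proof -
  have ee: "e * e = 1" using e by (metis abs_mult_self_eq mult_1)
  have k: "e * sgn (inner w w0) \<noteq> 0" using e w by (auto simp: sgn_real_def)
  have "e * inner (side_rep e w0 w) w0 = (e * e) * (sgn (inner w w0) * inner w w0)"
    unfolding side_rep_def by (simp add: algebra_simps)
  also have "\<dots> = \<bar>inner w w0\<bar>" unfolding ee by (simp add: sgn_real_def)
  finally show "0 < e * inner (side_rep e w0 w) w0" using w by simp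
  show "ein_pt (side_rep e w0 w) = ein_pt w"
    unfolding side_rep_def using ein_pt_scaleR[OF k] .
  show "side_rep e w0 w \<in> nullcone" if "w \<in> nullcone"
    using that k unfolding side_rep_def by (rule nullcone_scaleR)
  show "side_rep e w0 w = w" if pos: "0 < e * inner w w0"
  proof -
    have "sgn (inner w w0) = e"
      using e pos by (cases "e > 0") (auto simp: sgn_real_def zero_less_mult_iff)
    then show ?thesis unfolding side_rep_def using ee by simp
  qed
qed

lemma ray_on_side_ein_pt:
  assumes e: "\<bar>e\<bar> = 1" and w: "inner w w0 \<noteq> 0"
  shows "ray_on_side e w0 (ein_pt w) = einhat_pt (side_rep e w0 w)"
proof -
  let ?v = "side_rep e w0 w"
  have v: "0 < e * inner ?v w0" "ein_pt ?v = ein_pt w" using side_rep[OF e w] by auto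
  have "u \<in> ray_on_side e w0 (ein_pt ?v) \<longleftrightarrow> u \<in> einhat_pt ?v" for u
  proof
    assume "u \<in> ray_on_side e w0 (ein_pt ?v)"
    then obtain c where c: "c \<noteq> 0" "u = c *\<^sub>R ?v" "0 < e * inner u w0"
      unfolding ray_on_side_def ein_pt_def by auto
    then have "0 < c * (e * inner ?v w0)" by (simp add: algebra_simps)
    then have "c > 0" using v(1) by (simp add: zero_less_mult_iff)
    then show "u \<in> einhat_pt ?v" unfolding einhat_pt_def using c by blast
  next
    assume "u \<in> einhat_pt ?v"
    then obtain c where c: "c > 0" "u = c *\<^sub>R ?v" unfolding einhat_pt_def by auto
    then have "0 < e * inner u w0" using v(1) by (simp add: algebra_simps)
    then show "u \<in> ray_on_side e w0 (ein_pt ?v)"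
      unfolding ray_on_side_def ein_pt_def using c by auto
  qed
  then show ?thesis using v(2) by auto
qed

lemma continuous_map_ray_on_side:
  assumes e: "\<bar>e\<bar> = 1"
  shows "continuous_map (subtopology Ein (ein_transverse w0)) (subtopology EinHat (einhat_side e w0))
           (ray_on_side e w0)"
proof -
  let ?A = "{w \<in> nullcone. inner w w0 \<noteq> 0}"
  have "quotient_map (subtopology (top_of_set nullcone) ?A) (subtopology Ein (ein_transverse w0)) ein_pt"
    using quotient_map_restriction[OF quotient_map_Ein preimage_ein_transverse] openin_ein_transverse
    by blast
  moreover have "subtopology (top_of_set nullcone) ?A = top_of_set ?A"
  proof -
    have "nullcone \<inter> ?A = ?A" by blast
    then show ?thesis by (simp add: subtopology_subtopology)
  qed
  ultimately have q: "quotient_map (top_of_set ?A) (subtopology Ein (ein_transverse w0)) ein_pt"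
    by simp
  have "continuous_on ?A (side_rep e w0)"
    unfolding side_rep_def by (intro continuous_intros) auto
  then have "continuous_map (top_of_set ?A) (top_of_set nullcone) (side_rep e w0)"
    using side_rep(3)[OF e] by (auto simp: continuous_map_in_subtopology continuous_map_iff_continuous)
  then have "continuous_map (top_of_set ?A) EinHat (einhat_pt \<circ> side_rep e w0)"
    using quotient_imp_continuous_map[OF quotient_map_EinHat] by (rule continuous_map_compose)
  moreover have "einhat_pt (side_rep e w0 w) \<in> einhat_side e w0" if "w \<in> ?A" for w
    using that side_rep[OF e] unfolding einhat_side_def by auto
  ultimately have "continuous_map (top_of_set ?A) (subtopology EinHat (einhat_side e w0))
                     (einhat_pt \<circ> side_rep e w0)"
    by (auto simp: continuous_map_in_subtopology)
  then have "continuous_map (top_of_set ?A) (subtopology EinHat (einhat_side e w0))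
               (ray_on_side e w0 \<circ> ein_pt)"
    by (rule continuous_map_eq) (simp add: ray_on_side_ein_pt[OF e])
  then show ?thesis
    using continuous_compose_quotient_map[OF q] by blast
qed

lemma homeomorphic_maps_einhat_side:
  assumes e: "\<bar>e\<bar> = 1"
  shows "homeomorphic_maps (subtopology EinHat (einhat_side e w0)) (subtopology Ein (ein_transverse w0))
           ein_cover (ray_on_side e w0)"
  unfolding homeomorphic_maps_def
proof (intro conjI ballI)
  have "ein_cover x \<in> ein_transverse w0" if "x \<in> einhat_side e w0" for x
    using that unfolding einhat_side_def ein_transverse_def by auto
  then show "continuous_map (subtopology EinHat (einhat_side e w0)) (subtopology Ein (ein_transverse w0))
               ein_cover"
    using continuous_map_from_subtopology[OF continuous_map_ein_cover]
    by (auto simp: continuous_map_in_subtopology)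
  show "continuous_map (subtopology Ein (ein_transverse w0)) (subtopology EinHat (einhat_side e w0))
          (ray_on_side e w0)"
    using e by (rule continuous_map_ray_on_side)
  fix x assume "x \<in> topspace (subtopology EinHat (einhat_side e w0))"
  then obtain w where pos: "0 < e * inner w w0" and x: "x = einhat_pt w"
    unfolding einhat_side_def by auto
  then have "inner w w0 \<noteq> 0" by auto
  then show "ray_on_side e w0 (ein_cover x) = x"
    using ray_on_side_ein_pt[OF e] side_rep(4)[OF e _ pos] unfolding x by simp
next
  fix y assume "y \<in> topspace (subtopology Ein (ein_transverse w0))"
  then obtain w where "inner w w0 \<noteq> 0" "y = ein_pt w"
    unfolding ein_transverse_def by auto
  then show "ein_cover (ray_on_side e w0 y) = y"
    using side_rep[OF e] ray_on_side_ein_pt[OF e] by simp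
qed

lemma preimage_ein_transverse_einhat_sides:
  "{x \<in> topspace EinHat. ein_cover x \<in> ein_transverse w0} = einhat_side 1 w0 \<union> einhat_side (-1) w0"
proof (intro equalityI subsetI)
  fix x assume "x \<in> {x \<in> topspace EinHat. ein_cover x \<in> ein_transverse w0}"
  then obtain w where w: "w \<in> nullcone" "x = einhat_pt w" "ein_pt w \<in> ein_transverse w0"
    unfolding topspace_EinHat by auto
  then have "inner w w0 \<noteq> 0"
    using preimage_ein_transverse[of w0] by auto
  then consider "0 < 1 * inner w w0" | "0 < -1 * inner w w0" by linarith
  then show "x \<in> einhat_side 1 w0 \<union> einhat_side (-1) w0"
    using w unfolding einhat_side_def by cases auto
next
  fix x assume "x \<in> einhat_side 1 w0 \<union> einhat_side (-1) w0"
  then obtain w where "w \<in> nullcone" "inner w w0 \<noteq> 0" "x = einhat_pt w"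
    unfolding einhat_side_def by auto
  then show "x \<in> {x \<in> topspace EinHat. ein_cover x \<in> ein_transverse w0}"
    unfolding topspace_EinHat ein_transverse_def by auto
qed

lemma disjnt_einhat_sides: "disjnt (einhat_side 1 w0) (einhat_side (-1) w0)"
  unfolding disjnt_def
proof (rule equals0I)
  fix x assume "x \<in> einhat_side 1 w0 \<inter> einhat_side (-1) w0"
  then obtain w w' where "0 < inner w w0" "inner w' w0 < 0" "einhat_pt w = einhat_pt w'"
    unfolding einhat_side_def by auto
  then obtain a where "a > 0" "0 < inner w w0" "a * inner w w0 < 0"
    by (auto simp: einhat_pt_eq_iff)
  then show False by (simp add: mult_less_0_iff)
qed

lemma ein_cover_fibre:
  assumes w: "w \<in> nullcone"
  shows "{x \<in> topspace EinHat. ein_cover x = ein_pt w} = {einhat_pt w, einhat_pt (- w)}"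
    and "einhat_pt w \<noteq> einhat_pt (- w)"
proof (intro equalityI subsetI)
  fix x assume "x \<in> {x \<in> topspace EinHat. ein_cover x = ein_pt w}"
  then obtain w' where "x = einhat_pt w'" "ein_pt w = ein_pt w'"
    unfolding topspace_EinHat by auto
  then obtain a where x: "x = einhat_pt w'" "a \<noteq> 0" "w' = a *\<^sub>R w"
    unfolding ein_pt_eq_iff by blast
  show "x \<in> {einhat_pt w, einhat_pt (- w)}"
  proof (cases "a > 0")
    case True
    then show ?thesis using x einhat_pt_scaleR by simp
  next
    case False
    then have "- a > 0" using x(2) by simp
    then have "einhat_pt ((- a) *\<^sub>R (- w)) = einhat_pt (- w)" by (rule einhat_pt_scaleR)
    then show ?thesis using x by simp
  qed
next
  fix x assume x: "x \<in> {einhat_pt w, einhat_pt (- w)}"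
  have "- w \<in> nullcone" using nullcone_scaleR[OF w, of "-1"] by simp
  then show "x \<in> {x \<in> topspace EinHat. ein_cover x = ein_pt w}"
    using x w unfolding topspace_EinHat by (auto simp: ein_pt_uminus)
next
  show "einhat_pt w \<noteq> einhat_pt (- w)"
  proof
    assume "einhat_pt w = einhat_pt (- w)"
    then obtain a where a: "a > 0" "- w = a *\<^sub>R w" by (auto simp: einhat_pt_eq_iff)
    have "(1 + a) *\<^sub>R w = w + a *\<^sub>R w" by (simp add: scaleR_add_left)
    also have "\<dots> = 0" unfolding a(2)[symmetric] by simp
    finally show False using a(1) nullcone_nonzero[OF w] by simp
  qed
qed

theorem double_covering_map_EinHat: "double_covering_map EinHat Ein ein_cover"
  unfolding double_covering_map_def covering_map_def
proof (intro conjI ballI)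
  show "continuous_map EinHat Ein ein_cover" by (rule continuous_map_ein_cover)
  show "ein_cover ` topspace EinHat = topspace Ein"
    unfolding topspace_EinHat topspace_Ein image_image by simp
next
  fix y assume "y \<in> topspace Ein"
  then obtain w0 where w0: "w0 \<in> nullcone" "y = ein_pt w0" unfolding topspace_Ein by auto
  have pm1: "\<bar>1::real\<bar> = 1" "\<bar>-1::real\<bar> = 1" by simp_all
  show "\<exists>T. y \<in> T \<and> openin Ein T \<and>
          (\<exists>v. \<Union>v = {x \<in> topspace EinHat. ein_cover x \<in> T} \<and> (\<forall>u\<in>v. openin EinHat u) \<and>
               pairwise disjnt v \<and>
               (\<forall>u\<in>v. \<exists>q. homeomorphic_maps (subtopology EinHat u) (subtopology Ein T) ein_cover q))"
  proof (intro exI conjI)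
    have "inner w0 w0 \<noteq> 0" using nullcone_nonzero[OF w0(1)] by simp
    then show "y \<in> ein_transverse w0"
      using w0 unfolding ein_transverse_def by blast
    show "openin Ein (ein_transverse w0)" by (rule openin_ein_transverse)
    show "\<Union>{einhat_side 1 w0, einhat_side (-1) w0} = {x \<in> topspace EinHat. ein_cover x \<in> ein_transverse w0}"
      unfolding preimage_ein_transverse_einhat_sides by simp
    show "\<forall>u\<in>{einhat_side 1 w0, einhat_side (-1) w0}. openin EinHat u"
      using openin_einhat_side by blast
    show "pairwise disjnt {einhat_side 1 w0, einhat_side (-1) w0}"
      using disjnt_einhat_sides disjnt_sym unfolding pairwise_def by blast
    show "\<forall>u\<in>{einhat_side 1 w0, einhat_side (-1) w0}.
            \<exists>q. homeomorphic_maps (subtopology EinHat u) (subtopology Ein (ein_transverse w0)) ein_cover q"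
      using homeomorphic_maps_einhat_side[OF pm1(1)] homeomorphic_maps_einhat_side[OF pm1(2)] by blast
  qed
next
  fix y assume "y \<in> topspace Ein"
  then obtain w where "w \<in> nullcone" "y = ein_pt w" unfolding topspace_Ein by auto
  then show "card {x \<in> topspace EinHat. ein_cover x = y} = 2"
    using ein_cover_fibre by simp
qed

section \<open>The crooked cone and its torus parametrisation\<close>

text \<open>In the frame coordinates introduced below, the finite point p + a f1 + b f2 + c n of
  the crooked plane is the null vector (1, a, b, c, c^2 - a b) of the form
  m4^2 - m1 m5 - m2 m3, and the three disjuncts of crooked_sides are the wing along f1
  (b = 0, c \<ge> 0), the wing along f2 (a = 0, c \<le> 0) and the stem (c = 0, a b \<ge> 0).\<close>

definition crooked_sides :: "real^5 \<Rightarrow> bool" where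
  "crooked_sides m \<longleftrightarrow>
     (m$3 = 0 \<and> 0 \<le> m$1 * m$4) \<or> (m$2 = 0 \<and> m$1 * m$4 \<le> 0) \<or> (m$4 = 0 \<and> 0 \<le> m$2 * m$3)"

definition crooked_cone :: "(real^5) set" where
  "crooked_cone = {m. m \<noteq> 0 \<and> (m$4)\<^sup>2 = m$1 * m$5 + m$2 * m$3 \<and> crooked_sides m}"

lemma crooked_sides_scaleR:
  assumes a: "a \<noteq> 0"
  shows "crooked_sides (a *\<^sub>R m) \<longleftrightarrow> crooked_sides m"
proof -
  have a2: "a\<^sup>2 > 0" using a by simp
  have p14: "(a *\<^sub>R m)$1 * (a *\<^sub>R m)$4 = a\<^sup>2 * (m$1 * m$4)"
    and p23: "(a *\<^sub>R m)$2 * (a *\<^sub>R m)$3 = a\<^sup>2 * (m$2 * m$3)"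
    by (simp_all add: algebra_simps power2_eq_square)
  show ?thesis
    unfolding crooked_sides_def p14 p23 using a a2 by (simp add: zero_le_mult_iff mult_le_0_iff)
qed

lemma crooked_cone_scaleR:
  assumes m: "m \<in> crooked_cone" and a: "a \<noteq> 0"
  shows "a *\<^sub>R m \<in> crooked_cone"
proof -
  have "((a *\<^sub>R m)$4)\<^sup>2 = a\<^sup>2 * (m$4)\<^sup>2" by (simp add: power_mult_distrib)
  also have "\<dots> = (a *\<^sub>R m)$1 * (a *\<^sub>R m)$5 + (a *\<^sub>R m)$2 * (a *\<^sub>R m)$3"
    using m unfolding crooked_cone_def by (simp add: algebra_simps power2_eq_square)
  finally show ?thesis
    using m a crooked_sides_scaleR[OF a] unfolding crooked_cone_def by simp
qed

text \<open>With y = ((m1 + m5)/2, (m2 + m3)/2) and x = ((m1 - m5)/2, (m2 - m3)/2, m4) the cone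
  is |x| = |y|. A ray of the crooked cone is normalised by |y| = 1, y = (c, s); the second
  circle parameter (g, h) gives x1 = g and a point (x2, x0) of the circle of radius |h|,
  which runs along the stem segment |x2| \<le> |s|, x0 = 0, for |h| \<le> |s| and up one wing
  branch x2 = \<plusminus>s beyond.\<close>

definition clip :: "real \<Rightarrow> real \<Rightarrow> real" where
  "clip a h = max (- a) (min a h)"

definition param_x2 :: "real \<Rightarrow> real \<Rightarrow> real" where
  "param_x2 s h = sgn s * clip \<bar>s\<bar> h"

definition param_x0 :: "real \<Rightarrow> real \<Rightarrow> real \<Rightarrow> real" where
  "param_x0 c s h = sgn c * (sgn h * sqrt (max 0 (h\<^sup>2 - s\<^sup>2)))"

definition cone_param :: "real \<Rightarrow> real \<Rightarrow> real \<Rightarrow> real \<Rightarrow> real^5" where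
  "cone_param c s g h = vector [c + g, s + param_x2 s h, s - param_x2 s h, param_x0 c s h, c - g]"

lemma clip_small: "\<bar>h\<bar> \<le> a \<Longrightarrow> clip a h = h"
  unfolding clip_def by auto

lemma clip_big: "a \<le> h \<Longrightarrow> 0 \<le> a \<Longrightarrow> clip a h = a"
  unfolding clip_def by auto

lemma clip_big_neg: "h \<le> - a \<Longrightarrow> 0 \<le> a \<Longrightarrow> clip a h = - a"
  unfolding clip_def by auto

lemma clip_uminus: "0 \<le> a \<Longrightarrow> clip a (- h) = - clip a h"
  unfolding clip_def by auto

lemma param_uminus: "param_x2 s (- h) = - param_x2 s h" "param_x0 c s (- h) = - param_x0 c s h"
  by (simp_all add: param_x2_def param_x0_def clip_uminus)

lemma param_x2_sq: "(param_x2 s h)\<^sup>2 = min (h\<^sup>2) (s\<^sup>2)"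
proof -
  have "(clip \<bar>s\<bar> h)\<^sup>2 = min (h\<^sup>2) (s\<^sup>2)"
  proof (cases "\<bar>h\<bar> \<le> \<bar>s\<bar>")
    case True
    then show ?thesis using clip_small[OF True] by (simp add: abs_le_square_iff min_def)
  next
    case False
    then have "h\<^sup>2 > s\<^sup>2" by (simp add: abs_le_square_iff)
    moreover have "clip \<bar>s\<bar> h = \<bar>s\<bar> \<or> clip \<bar>s\<bar> h = - \<bar>s\<bar>"
      using False unfolding clip_def by auto
    ultimately show ?thesis by (auto simp: min_def)
  qed
  then show ?thesis unfolding param_x2_def
    by (cases "s = 0") (auto simp: power_mult_distrib sgn_real_def)
qed

lemma param_x0_sq:
  assumes "c\<^sup>2 + s\<^sup>2 = 1" and "g\<^sup>2 + h\<^sup>2 = 1"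
  shows "(param_x0 c s h)\<^sup>2 = max 0 (h\<^sup>2 - s\<^sup>2)"
proof (cases "c = 0 \<or> h = 0")
  case True
  then show ?thesis
  proof
    assume "c = 0"
    then have "s\<^sup>2 = 1" using assms by simp
    moreover have "h\<^sup>2 \<le> 1" using assms(2) by (smt (verit) zero_le_power2)
    ultimately show ?thesis unfolding param_x0_def by simp
  next
    assume "h = 0"
    then show ?thesis unfolding param_x0_def by simp
  qed
next
  case False
  then show ?thesis unfolding param_x0_def
    by (simp add: power_mult_distrib sgn_real_def)
qed

lemma crooked_sides_cone_param:
  assumes cs: "c\<^sup>2 + s\<^sup>2 = 1" and gh: "g\<^sup>2 + h\<^sup>2 = 1"
  shows "crooked_sides (cone_param c s g h)"
proof (cases "h\<^sup>2 \<le> s\<^sup>2")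
  case True
  then have "param_x0 c s h = 0" unfolding param_x0_def by simp
  moreover have "(s + param_x2 s h) * (s - param_x2 s h) \<ge> 0"
    using param_x2_sq[of s h] True by (simp add: algebra_simps power2_eq_square min_def)
  ultimately show ?thesis unfolding cone_param_def crooked_sides_def by simp
next
  case False
  then have hs: "\<bar>s\<bar> < \<bar>h\<bar>" by (metis abs_le_square_iff not_le)
  have "g\<^sup>2 < c\<^sup>2" using False cs gh by simp
  then have "\<bar>g\<bar> < \<bar>c\<bar>" by (metis abs_le_square_iff not_le)
  then have cg: "0 \<le> sgn c * (c + g)" by (auto simp: sgn_real_def)
  have x0: "(c + g) * param_x0 c s h = sgn h * ((sgn c * (c + g)) * sqrt (max 0 (h\<^sup>2 - s\<^sup>2)))"
    unfolding param_x0_def by (simp add: algebra_simps)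
  show ?thesis
  proof (cases "h > 0")
    case True
    then have "param_x2 s h = s"
      using hs clip_big[of "\<bar>s\<bar>" h] unfolding param_x2_def by (simp add: sgn_mult_abs)
    moreover have "0 \<le> (c + g) * param_x0 c s h"
      unfolding x0 using True cg by simp
    ultimately show ?thesis unfolding cone_param_def crooked_sides_def by simp
  next
    case False
    then have "h < 0" using hs by auto
    then have "param_x2 s h = - s"
      using hs clip_big_neg[of h "\<bar>s\<bar>"] unfolding param_x2_def by (simp add: sgn_mult_abs)
    moreover have "(c + g) * param_x0 c s h \<le> 0"
      unfolding x0 using \<open>h < 0\<close> cg by (simp add: mult_nonneg_nonneg)
    ultimately show ?thesis unfolding cone_param_def crooked_sides_def by simp
  qed
qed

lemma cone_param_in_crooked_cone:
  assumes cs: "c\<^sup>2 + s\<^sup>2 = 1" and gh: "g\<^sup>2 + h\<^sup>2 = 1"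
  shows "cone_param c s g h \<in> crooked_cone"
proof -
  let ?m = "cone_param c s g h"
  have "?m \<noteq> 0"
  proof
    assume "?m = 0"
    then have "c + g = 0" "c - g = 0" "s + param_x2 s h = 0" "s - param_x2 s h = 0"
      unfolding cone_param_def by (auto simp: vec5_eq_iff)
    then show False using cs by simp
  qed
  moreover have "(?m$4)\<^sup>2 = ?m$1 * ?m$5 + ?m$2 * ?m$3"
  proof -
    have "?m$1 * ?m$5 + ?m$2 * ?m$3 = c\<^sup>2 - g\<^sup>2 + s\<^sup>2 - (param_x2 s h)\<^sup>2"
      unfolding cone_param_def by (simp add: algebra_simps power2_eq_square)
    also have "\<dots> = max 0 (h\<^sup>2 - s\<^sup>2)"
      using cs gh param_x2_sq by (simp add: algebra_simps min_def max_def)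
    finally show ?thesis using param_x0_sq[OF cs gh] unfolding cone_param_def by simp
  qed
  ultimately show ?thesis
    using crooked_sides_cone_param[OF cs gh] unfolding crooked_cone_def by blast
qed

lemma cone_param_uminus: "cone_param (- c) (- s) (- g) h = - cone_param c s g h"
  unfolding cone_param_def param_x0_def param_x2_def by (simp add: vec5_eq_iff algebra_simps)

lemma param_eq_imp_eq:
  assumes cs: "c\<^sup>2 + s\<^sup>2 = 1" and hh: "h'\<^sup>2 = h\<^sup>2"
    and x2: "param_x2 s h' = param_x2 s h" and x0: "param_x0 c s h' = param_x0 c s h"
  shows "h' = h"
proof (rule ccontr)
  assume ne: "h' \<noteq> h"
  then have h': "h' = - h" using hh by (metis power2_eq_iff)
  then have h0: "h \<noteq> 0" using ne by auto
  have a: "sgn s * clip \<bar>s\<bar> h = 0" using x2 param_uminus(1) unfolding h' param_x2_def by simp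
  have b: "param_x0 c s h = 0" using x0 param_uminus(2) unfolding h' by simp
  show False
  proof (cases "s = 0")
    case True
    then have "c \<noteq> 0" using cs by auto
    then have "sgn h * sqrt (h\<^sup>2) = 0"
      using b True unfolding param_x0_def by (auto simp: sgn_real_def split: if_splits)
    then show False using h0 by (auto simp: sgn_real_def split: if_splits)
  next
    case False
    then have "clip \<bar>s\<bar> h = 0" using a by (simp add: sgn_real_def split: if_splits)
    then show False using h0 False unfolding clip_def by (auto simp: max_def min_def split: if_splits)
  qed
qed

lemma cone_param_eq_scaleR:
  assumes cs: "c\<^sup>2 + s\<^sup>2 = 1" and gh: "g\<^sup>2 + h\<^sup>2 = 1"
    and cs': "c'\<^sup>2 + s'\<^sup>2 = 1" and gh': "g'\<^sup>2 + h'\<^sup>2 = 1"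
    and eq: "cone_param c' s' g' h' = l *\<^sub>R cone_param c s g h"
  shows "(l = 1 \<and> c' = c \<and> s' = s \<and> g' = g \<and> h' = h) \<or>
         (l = -1 \<and> c' = - c \<and> s' = - s \<and> g' = - g \<and> h' = h)"
proof -
  have e1: "c' + g' = l * (c + g)" and e5: "c' - g' = l * (c - g)"
    and e2: "s' + param_x2 s' h' = l * (s + param_x2 s h)"
    and e3: "s' - param_x2 s' h' = l * (s - param_x2 s h)"
    and e4: "param_x0 c' s' h' = l * param_x0 c s h"
    using eq unfolding cone_param_def by (auto simp: vec5_eq_iff)
  have c': "c' = l * c" and g': "g' = l * g" using e1 e5 by (auto simp: algebra_simps)
  have s': "s' = l * s" and x2: "param_x2 s' h' = l * param_x2 s h"
    using e2 e3 by (auto simp: algebra_simps)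
  have "c'\<^sup>2 + s'\<^sup>2 = l\<^sup>2 * (c\<^sup>2 + s\<^sup>2)" using c' s' by (simp add: power_mult_distrib algebra_simps)
  then have l2: "l\<^sup>2 = 1" using cs cs' by simp
  then have l: "l = 1 \<or> l = -1" by (simp add: power2_eq_1_iff)
  have hh: "h'\<^sup>2 = h\<^sup>2" using gh gh' g' l2 by (simp add: power_mult_distrib)
  from l show ?thesis
  proof
    assume l1: "l = 1"
    then have "h' = h" using param_eq_imp_eq[OF cs hh] x2 e4 c' s' by simp
    then show ?thesis using l1 c' s' g' by simp
  next
    assume l1: "l = -1"
    have "param_x2 s h' = param_x2 s h" using x2 s' l1 unfolding param_x2_def by simp
    moreover have "param_x0 c s h' = param_x0 c s h" using e4 c' s' l1 unfolding param_x0_def by simp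
    ultimately have "h' = h" using param_eq_imp_eq[OF cs hh] by simp
    then show ?thesis using l1 c' s' g' by simp
  qed
qed

lemma param_exists_stem:
  assumes "g\<^sup>2 + x2\<^sup>2 = 1" and "\<bar>x2\<bar> \<le> \<bar>s\<bar>"
  shows "\<exists>h. g\<^sup>2 + h\<^sup>2 = 1 \<and> param_x2 s h = x2 \<and> param_x0 c s h = 0"
proof (intro exI conjI)
  let ?h = "sgn s * x2"
  have hs: "\<bar>?h\<bar> \<le> \<bar>s\<bar>" using assms(2) by (simp add: abs_mult abs_sgn_eq)
  show "g\<^sup>2 + ?h\<^sup>2 = 1"
    using assms by (cases "s = 0") (auto simp: power_mult_distrib sgn_real_def)
  show "param_x2 s ?h = x2"
    using assms(2) clip_small[OF hs] unfolding param_x2_def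
    by (cases "s = 0") (auto simp: sgn_real_def)
  show "param_x0 c s ?h = 0"
    using hs unfolding param_x0_def by (simp add: abs_le_square_iff)
qed

lemma param_exists_wing:
  assumes cs: "c\<^sup>2 + s\<^sup>2 = 1" and unit: "g\<^sup>2 + s\<^sup>2 + x0\<^sup>2 = 1" and side: "0 \<le> (c + g) * x0"
  shows "\<exists>h. g\<^sup>2 + h\<^sup>2 = 1 \<and> param_x2 s h = s \<and> param_x0 c s h = x0"
proof (intro exI conjI)
  let ?h = "sqrt (x0\<^sup>2 + s\<^sup>2)"
  have hs: "\<bar>s\<bar> \<le> ?h" by (simp add: real_le_rsqrt)
  show "g\<^sup>2 + ?h\<^sup>2 = 1" using unit by simp
  show "param_x2 s ?h = s"
    using clip_big[OF hs abs_ge_zero] unfolding param_x2_def by (simp add: sgn_mult_abs)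
  show "param_x0 c s ?h = x0"
  proof (cases "x0 = 0")
    case True
    then show ?thesis unfolding param_x0_def by simp
  next
    case False
    then have hpos: "?h > 0" by (simp add: add_pos_nonneg)
    have "x0\<^sup>2 > 0" using False by simp
    then have "g\<^sup>2 < c\<^sup>2" using cs unit by linarith
    then have "\<bar>g\<bar> < \<bar>c\<bar>" by (metis abs_le_square_iff not_le)
    then have "sgn (c + g) = sgn c" by (auto simp: sgn_real_def)
    then have "sgn c = sgn x0"
      using side False \<open>\<bar>g\<bar> < \<bar>c\<bar>\<close> by (auto simp: sgn_real_def zero_le_mult_iff split: if_splits)
    then show ?thesis unfolding param_x0_def using hpos by (simp add: sgn_mult_abs)
  qed
qed

lemma crooked_cone_normal_form:
  assumes m: "m \<in> crooked_cone"
  obtains r c s g x2 x0 where "r > 0" "c\<^sup>2 + s\<^sup>2 = 1" "g\<^sup>2 + x2\<^sup>2 + x0\<^sup>2 = 1"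
    "m = r *\<^sub>R vector [c + g, s + x2, s - x2, x0, c - g]"
proof -
  have mnz: "m \<noteq> 0" and null: "(m$4)\<^sup>2 = m$1 * m$5 + m$2 * m$3"
    using m unfolding crooked_cone_def by auto
  define y1 where "y1 = (m$1 + m$5) / 2"
  define y2 where "y2 = (m$2 + m$3) / 2"
  define x1 where "x1 = (m$1 - m$5) / 2"
  define x2 where "x2 = (m$2 - m$3) / 2"
  define x0 where "x0 = m$4"
  have m_eq: "m = vector [y1 + x1, y2 + x2, y2 - x2, x0, y1 - x1]"
    unfolding vec5_eq_iff y1_def y2_def x1_def x2_def x0_def by (simp add: field_simps)
  have xy: "x0\<^sup>2 + x1\<^sup>2 + x2\<^sup>2 = y1\<^sup>2 + y2\<^sup>2"
    using null unfolding x0_def x1_def x2_def y1_def y2_def by (simp add: power2_eq_square field_simps)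
  define r where "r = sqrt (y1\<^sup>2 + y2\<^sup>2)"
  have r2: "r\<^sup>2 = y1\<^sup>2 + y2\<^sup>2" unfolding r_def by simp
  have rpos: "r > 0"
  proof (rule ccontr)
    assume "\<not> r > 0"
    moreover have "r \<ge> 0" unfolding r_def by simp
    ultimately have "y1\<^sup>2 + y2\<^sup>2 = 0" using r2 by simp
    then have "y1 = 0" "y2 = 0" "x0 = 0" "x1 = 0" "x2 = 0"
      using xy by (auto simp: add_nonneg_eq_0_iff)
    then show False using mnz m_eq by (simp add: vec5_eq_iff)
  qed
  show ?thesis
  proof
    show "r > 0" by (rule rpos)
    show "(y1 / r)\<^sup>2 + (y2 / r)\<^sup>2 = 1"
      unfolding power_divide using rpos by (simp add: add_divide_distrib[symmetric] r2[symmetric])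
    have "x1\<^sup>2 + x2\<^sup>2 + x0\<^sup>2 = r\<^sup>2" using xy r2 by simp
    then show "(x1 / r)\<^sup>2 + (x2 / r)\<^sup>2 + (x0 / r)\<^sup>2 = 1"
      unfolding power_divide using rpos by (simp add: add_divide_distrib[symmetric])
    show "m = r *\<^sub>R vector [y1 / r + x1 / r, y2 / r + x2 / r, y2 / r - x2 / r, x0 / r, y1 / r - x1 / r]"
      unfolding m_eq vec5_eq_iff using rpos by (simp add: field_simps)
  qed
qed

lemma cone_param_surj:
  assumes m: "m \<in> crooked_cone"
  shows "\<exists>r>0. \<exists>c s g h. c\<^sup>2 + s\<^sup>2 = 1 \<and> g\<^sup>2 + h\<^sup>2 = 1 \<and> m = r *\<^sub>R cone_param c s g h"
proof -
  obtain r c s g x2 x0 where r: "r > 0" and cs: "c\<^sup>2 + s\<^sup>2 = 1" and unit: "g\<^sup>2 + x2\<^sup>2 + x0\<^sup>2 = 1"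
    and m_r: "m = r *\<^sub>R vector [c + g, s + x2, s - x2, x0, c - g]"
    using crooked_cone_normal_form[OF m] by blast
  have "crooked_sides (vector [c + g, s + x2, s - x2, x0, c - g])"
    using m crooked_sides_scaleR[of r] r unfolding m_r crooked_cone_def by simp
  moreover have "0 \<le> (s + x2) * (s - x2) \<longleftrightarrow> \<bar>x2\<bar> \<le> \<bar>s\<bar>"
    by (simp add: abs_le_square_iff algebra_simps power2_eq_square)
  ultimately consider "x2 = s" "0 \<le> (c + g) * x0" | "x2 = - s" "(c + g) * x0 \<le> 0"
    | "x0 = 0" "\<bar>x2\<bar> \<le> \<bar>s\<bar>"
    unfolding crooked_sides_def by force
  then have "\<exists>h. g\<^sup>2 + h\<^sup>2 = 1 \<and> param_x2 s h = x2 \<and> param_x0 c s h = x0"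
  proof cases
    case 1
    then show ?thesis using param_exists_wing[OF cs] unit by simp
  next
    case 2
    then have "0 \<le> (c + g) * (- x0)" "g\<^sup>2 + s\<^sup>2 + (- x0)\<^sup>2 = 1"
      using unit by simp_all
    then obtain h where "g\<^sup>2 + h\<^sup>2 = 1" "param_x2 s h = s" "param_x0 c s h = - x0"
      using param_exists_wing[OF cs] by blast
    then have "g\<^sup>2 + (- h)\<^sup>2 = 1 \<and> param_x2 s (- h) = x2 \<and> param_x0 c s (- h) = x0"
      using 2 by (simp add: param_uminus)
    then show ?thesis by blast
  next
    case 3
    then show ?thesis using param_exists_stem[of g x2 s c] unit by simp
  qed
  then obtain h where h: "g\<^sup>2 + h\<^sup>2 = 1" "param_x2 s h = x2" "param_x0 c s h = x0"
    by blast
  then have "m = r *\<^sub>R cone_param c s g h"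
    unfolding m_r cone_param_def by simp
  then show ?thesis using r cs h(1) by blast
qed

lemma continuous_on_sgn_mult:
  fixes f q :: "'a::metric_space \<Rightarrow> real"
  assumes f: "continuous_on S f" and q: "continuous_on S q"
    and z: "\<And>x. x \<in> S \<Longrightarrow> q x = 0 \<Longrightarrow> f x = 0"
  shows "continuous_on S (\<lambda>x. sgn (q x) * f x)"
  unfolding continuous_on_eq_continuous_within
proof (rule ballI)
  fix x assume x: "x \<in> S"
  have fx: "(f \<longlongrightarrow> f x) (at x within S)" and qx: "(q \<longlongrightarrow> q x) (at x within S)"
    using f q x by (auto simp: continuous_on_eq_continuous_within continuous_within)
  show "continuous (at x within S) (\<lambda>x. sgn (q x) * f x)"
    unfolding continuous_within
  proof (cases "q x = 0")
    case True
    then have "f x = 0" using z x by auto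
    then have f0: "(f \<longlongrightarrow> 0) (at x within S)" using fx by simp
    have "((\<lambda>y. sgn (q y) * f y) \<longlongrightarrow> 0) (at x within S)"
    proof (rule Lim_null_comparison[where g="\<lambda>y. norm (f y)"])
      show "\<forall>\<^sub>F y in at x within S. norm (sgn (q y) * f y) \<le> norm (f y)"
        by (auto simp: abs_mult sgn_real_def)
      show "((\<lambda>y. norm (f y)) \<longlongrightarrow> 0) (at x within S)"
        using tendsto_norm_zero[OF f0] .
    qed
    then show "((\<lambda>y. sgn (q y) * f y) \<longlongrightarrow> sgn (q x) * f x) (at x within S)"
      using True by simp
  next
    case False
    then show "((\<lambda>y. sgn (q y) * f y) \<longlongrightarrow> sgn (q x) * f x) (at x within S)"
      by (intro tendsto_intros qx fx)
  qed
qed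

lemma continuous_on_cone_param:
  fixes c s g h :: "'a::metric_space \<Rightarrow> real"
  assumes cc: "continuous_on D c" and cs: "continuous_on D s"
    and cg: "continuous_on D g" and ch: "continuous_on D h"
    and u1: "\<And>x. x \<in> D \<Longrightarrow> (c x)\<^sup>2 + (s x)\<^sup>2 = 1" and u2: "\<And>x. x \<in> D \<Longrightarrow> (g x)\<^sup>2 + (h x)\<^sup>2 = 1"
  shows "continuous_on D (\<lambda>x. cone_param (c x) (s x) (g x) (h x))"
proof -
  have x2: "continuous_on D (\<lambda>x. param_x2 (s x) (h x))"
    unfolding param_x2_def clip_def
    by (rule continuous_on_sgn_mult) (auto intro!: continuous_intros cs ch)
  have "continuous_on D (\<lambda>x. sgn (h x) * sqrt (max 0 ((h x)\<^sup>2 - (s x)\<^sup>2)))"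
    by (rule continuous_on_sgn_mult) (auto intro!: continuous_intros cs ch)
  then have x0: "continuous_on D (\<lambda>x. param_x0 (c x) (s x) (h x))"
    unfolding param_x0_def
  proof (rule continuous_on_sgn_mult[OF _ cc])
    fix x assume x: "x \<in> D" "c x = 0"
    then have "(s x)\<^sup>2 = 1" using u1[OF x(1)] by simp
    moreover have "(h x)\<^sup>2 \<le> 1" using u2[OF x(1)] by (smt (verit) zero_le_power2)
    ultimately show "sgn (h x) * sqrt (max 0 ((h x)\<^sup>2 - (s x)\<^sup>2)) = 0" by simp
  qed
  have "cone_param (c x) (s x) (g x) (h x) =
          (c x + g x) *\<^sub>R axis 1 1 + (s x + param_x2 (s x) (h x)) *\<^sub>R axis 2 1
        + (s x - param_x2 (s x) (h x)) *\<^sub>R axis 3 1 + param_x0 (c x) (s x) (h x) *\<^sub>R axis 4 1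
        + (c x - g x) *\<^sub>R axis 5 1" for x
    unfolding cone_param_def by (simp add: vec5_eq_iff axis_def)
  then show ?thesis
    by (simp only:) (intro continuous_intros x2 x0 cc cs cg ch)
qed

section \<open>Null frames adapted to a crooked plane\<close>

definition null_lift :: "real^3 \<Rightarrow> real^5" where
  "null_lift x = vector [x$1, x$2, x$3, mink x x, 1]"

lemma ein_embed_null_lift: "ein_embed x = ein_pt (null_lift x)"
  unfolding ein_embed_def null_lift_def by simp

locale crooked_frame =
  fixes p f1 f2 n :: "real^3"
  assumes f1_null: "mink f1 f1 = 0" and f2_null: "mink f2 f2 = 0" and f1_f2: "mink f1 f2 = -1/2"
    and n_f1: "mink n f1 = 0" and n_f2: "mink n f2 = 0" and n_unit: "mink n n = 1"
begin

lemma f2_f1: "mink f2 f1 = -1/2" using f1_f2 mink_sym by metis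
lemma f1_n: "mink f1 n = 0" using n_f1 mink_sym by metis
lemma f2_n: "mink f2 n = 0" using n_f2 mink_sym by metis

lemmas frame_rels = f1_null f2_null f1_f2 f2_f1 n_f1 n_f2 f1_n f2_n n_unit

definition frame_point :: "real^5 \<Rightarrow> real^3" where
  "frame_point m = m$1 *\<^sub>R p + m$2 *\<^sub>R f1 + m$3 *\<^sub>R f2 + m$4 *\<^sub>R n"

text \<open>The columns of frame_map are null_lift p, the derivatives of null_lift at p in the
  directions f1, f2, n, and the vertex (0, 0, 0, 1, 0) of the light cone at infinity.\<close>

definition frame_map :: "real^5 \<Rightarrow> real^5" where
  "frame_map m = vector [(frame_point m)$1, (frame_point m)$2, (frame_point m)$3,
     m$1 * mink p p + 2 * (m$2 * mink p f1 + m$3 * mink p f2 + m$4 * mink p n) + m$5, m$1]"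

lemma frame_map_nth [simp]:
  "(frame_map m)$1 = (frame_point m)$1" "(frame_map m)$2 = (frame_point m)$2"
  "(frame_map m)$3 = (frame_point m)$3"
  "(frame_map m)$4 = m$1 * mink p p + 2 * (m$2 * mink p f1 + m$3 * mink p f2 + m$4 * mink p n) + m$5"
  "(frame_map m)$5 = m$1"
  unfolding frame_map_def by simp_all

lemma mink_frame_point:
  "mink (frame_point m) (frame_point m) = (m$1)\<^sup>2 * mink p p
     + 2 * m$1 * (m$2 * mink p f1 + m$3 * mink p f2 + m$4 * mink p n) - m$2 * m$3 + (m$4)\<^sup>2"
proof -
  have "mink f1 p = mink p f1" "mink f2 p = mink p f2" "mink n p = mink p n"
    using mink_sym by metis+
  then show ?thesis
    unfolding frame_point_def by (simp add: mink_linear frame_rels algebra_simps power2_eq_square)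
qed

lemma form32_frame_map: "form32 (frame_map m) (frame_map m) = (m$4)\<^sup>2 - m$1 * m$5 - m$2 * m$3"
proof -
  have "form32 (frame_map m) (frame_map m)
          = mink (frame_point m) (frame_point m) - (frame_map m)$4 * (frame_map m)$5"
    unfolding form32_def mink_def by simp
  then show ?thesis unfolding mink_frame_point by (simp add: algebra_simps power2_eq_square)
qed

lemma linear_frame_map: "linear frame_map"
  by (rule linearI) (simp_all add: vec5_eq_iff frame_point_def algebra_simps)

lemma continuous_on_frame_map: "continuous_on S frame_map"
  using linear_frame_map by (simp add: linear_continuous_on linear_linear)

lemma frame_map_scaleR: "frame_map (a *\<^sub>R m) = a *\<^sub>R frame_map m"
  using linear_frame_map by (rule linear_scale)

lemma frame_coords_unique:
  assumes "a *\<^sub>R f1 + b *\<^sub>R f2 + c *\<^sub>R n = a' *\<^sub>R f1 + b' *\<^sub>R f2 + c' *\<^sub>R n"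
  shows "a = a' \<and> b = b' \<and> c = c'"
proof -
  have "mink (a *\<^sub>R f1 + b *\<^sub>R f2 + c *\<^sub>R n) v = mink (a' *\<^sub>R f1 + b' *\<^sub>R f2 + c' *\<^sub>R n) v" for v
    using assms by simp
  from this[of f2] this[of f1] this[of n] show ?thesis
    by (simp add: mink_linear frame_rels)
qed

lemma inj_frame_map: "inj frame_map"
proof -
  have "m = 0" if "frame_map m = 0" for m
  proof -
    have m1: "m$1 = 0" using frame_map_nth(5)[of m] that by simp
    have "frame_point m = 0" using frame_map_nth(1-3)[of m] that by (simp add: vec3_eq_iff)
    then have "m$2 *\<^sub>R f1 + m$3 *\<^sub>R f2 + m$4 *\<^sub>R n = 0 *\<^sub>R f1 + 0 *\<^sub>R f2 + 0 *\<^sub>R n"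
      unfolding frame_point_def m1 by simp
    then have "m$2 = 0" "m$3 = 0" "m$4 = 0" using frame_coords_unique by blast+
    moreover have "m$5 = 0" using frame_map_nth(4)[of m] that m1 calculation by simp
    ultimately show ?thesis using m1 by (simp add: vec5_eq_iff)
  qed
  then show ?thesis using linear_frame_map by (simp add: linear_injective_0)
qed

lemma frame_map_in_nullcone_iff:
  "frame_map m \<in> nullcone \<longleftrightarrow> m \<noteq> 0 \<and> (m$4)\<^sup>2 = m$1 * m$5 + m$2 * m$3"
proof -
  have "frame_map m = 0 \<longleftrightarrow> m = 0"
    using inj_frame_map linear_frame_map by (metis injD linear_0)
  then show ?thesis unfolding nullcone_def using form32_frame_map[of m] by auto
qed

lemma frame_map_crooked_cone: "m \<in> crooked_cone \<Longrightarrow> frame_map m \<in> nullcone"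
  unfolding frame_map_in_nullcone_iff crooked_cone_def by auto

lemma frame_decomp: "y = (-2 * mink y f2) *\<^sub>R f1 + (-2 * mink y f1) *\<^sub>R f2 + mink y n *\<^sub>R n"
proof -
  define D :: "real^3 \<Rightarrow> real^3" where "D v = v$1 *\<^sub>R f1 + v$2 *\<^sub>R f2 + v$3 *\<^sub>R n" for v
  have lin: "linear D"
    by (rule linearI) (simp_all add: D_def algebra_simps scaleR_add_left)
  have "inj D"
  proof (rule injI)
    fix u v assume "D u = D v"
    then have "u$1 = v$1 \<and> u$2 = v$2 \<and> u$3 = v$3"
      unfolding D_def by (rule frame_coords_unique)
    then show "u = v" by (simp add: vec3_eq_iff)
  qed
  then have "surj D" using linear_injective_imp_surjective[OF lin] by simp
  then obtain v where v: "y = D v" by (metis surjD)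
  show ?thesis unfolding v D_def by (simp add: mink_linear frame_rels)
qed

definition frame_crooked_plane :: "(real^3) set" where
  "frame_crooked_plane = {p + a *\<^sub>R f1 + c *\<^sub>R n | a c. c > 0}
     \<union> {p + a *\<^sub>R f1 + b *\<^sub>R f2 | a b. a * b \<ge> 0} \<union> {p + b *\<^sub>R f2 + c *\<^sub>R n | b c. c < 0}"

lemma null_lift_frame_point:
  "null_lift (p + a *\<^sub>R f1 + b *\<^sub>R f2 + c *\<^sub>R n) = frame_map (vector [1, a, b, c, c\<^sup>2 - a * b])"
proof -
  let ?m = "vector [1, a, b, c, c\<^sup>2 - a * b] :: real^5"
  have x: "frame_point ?m = p + a *\<^sub>R f1 + b *\<^sub>R f2 + c *\<^sub>R n"
    unfolding frame_point_def by (simp add: add.assoc)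
  show ?thesis
    using mink_frame_point[of ?m] unfolding null_lift_def vec5_eq_iff x[symmetric]
    by (simp add: algebra_simps power2_eq_square)
qed

lemma frame_crooked_plane_coords:
  "p + a *\<^sub>R f1 + b *\<^sub>R f2 + c *\<^sub>R n \<in> frame_crooked_plane \<longleftrightarrow>
     (b = 0 \<and> c > 0) \<or> (c = 0 \<and> a * b \<ge> 0) \<or> (a = 0 \<and> c < 0)"
  (is "?x \<in> _ \<longleftrightarrow> _")
proof
  assume "?x \<in> frame_crooked_plane"
  then consider (A) a' c' where "?x = p + a' *\<^sub>R f1 + c' *\<^sub>R n" "c' > 0"
    | (B) a' b' where "?x = p + a' *\<^sub>R f1 + b' *\<^sub>R f2" "a' * b' \<ge> 0"
    | (C) b' c' where "?x = p + b' *\<^sub>R f2 + c' *\<^sub>R n" "c' < 0"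
    unfolding frame_crooked_plane_def by blast
  then show "(b = 0 \<and> c > 0) \<or> (c = 0 \<and> a * b \<ge> 0) \<or> (a = 0 \<and> c < 0)"
  proof cases
    case A
    then have "a *\<^sub>R f1 + b *\<^sub>R f2 + c *\<^sub>R n = a' *\<^sub>R f1 + 0 *\<^sub>R f2 + c' *\<^sub>R n"
      by (simp add: algebra_simps)
    then show ?thesis using frame_coords_unique A by blast
  next
    case B
    then have "a *\<^sub>R f1 + b *\<^sub>R f2 + c *\<^sub>R n = a' *\<^sub>R f1 + b' *\<^sub>R f2 + 0 *\<^sub>R n"
      by (simp add: algebra_simps)
    then show ?thesis using frame_coords_unique B by blast
  next
    case C
    then have "a *\<^sub>R f1 + b *\<^sub>R f2 + c *\<^sub>R n = 0 *\<^sub>R f1 + b' *\<^sub>R f2 + c' *\<^sub>R n"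
      by (simp add: algebra_simps)
    then show ?thesis using frame_coords_unique C by blast
  qed
next
  assume "(b = 0 \<and> c > 0) \<or> (c = 0 \<and> a * b \<ge> 0) \<or> (a = 0 \<and> c < 0)"
  then show "?x \<in> frame_crooked_plane"
    unfolding frame_crooked_plane_def by (auto simp: algebra_simps) (blast+)
qed

lemma frame_crooked_plane_iff:
  "p + a *\<^sub>R f1 + b *\<^sub>R f2 + c *\<^sub>R n \<in> frame_crooked_plane \<longleftrightarrow>
     (vector [1, a, b, c, c\<^sup>2 - a * b] :: real^5) \<in> crooked_cone"
  unfolding frame_crooked_plane_coords crooked_cone_def crooked_sides_def
  by (auto simp: vec5_eq_iff zero_le_mult_iff mult_le_0_iff)

end

section \<open>The closure of a crooked plane in the Einstein universe\<close>

lemma stem_point_in_crooked_cone: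
  assumes "x$1 \<noteq> 0" and "x$4 = 0" and "x$1 * x$5 + x$2 * x$3 = 0" and "0 \<le> x$2 * x$3"
  shows "x \<in> crooked_cone"
proof -
  have "x \<noteq> 0" using assms(1) by auto
  then show ?thesis using assms unfolding crooked_cone_def crooked_sides_def by auto
qed

lemma closed_crooked_sides: "closed {m. crooked_sides m}"
proof -
  have "{m. crooked_sides m} = ({m. m$3 = 0} \<inter> {m. 0 \<le> m$1 * m$4}) \<union> ({m. m$2 = 0} \<inter> {m. m$1 * m$4 \<le> 0})
          \<union> ({m. m$4 = 0} \<inter> {m. 0 \<le> m$2 * m$3})"
    unfolding crooked_sides_def by auto
  moreover have "closed \<dots>"
    by (intro closed_Un closed_Int closed_Collect_eq closed_Collect_le continuous_intros)
  ultimately show ?thesis by simp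
qed

context crooked_frame
begin

definition crooked_closure :: "(real^5) set set" where
  "crooked_closure = ein_pt ` frame_map ` crooked_cone"

definition crooked_lift :: "(real^5) set set" where
  "crooked_lift = einhat_pt ` frame_map ` crooked_cone"

lemma ein_embed_frame_crooked_plane:
  "ein_embed ` frame_crooked_plane = ein_pt ` frame_map ` {m \<in> crooked_cone. m$1 \<noteq> 0}"
proof (intro equalityI subsetI)
  fix S assume "S \<in> ein_embed ` frame_crooked_plane"
  then obtain x where x: "x \<in> frame_crooked_plane" "S = ein_embed x" by auto
  define a where "a = -2 * mink (x - p) f2"
  define b where "b = -2 * mink (x - p) f1"
  define c where "c = mink (x - p) n"
  have xe: "x = p + a *\<^sub>R f1 + b *\<^sub>R f2 + c *\<^sub>R n"
    using frame_decomp[of "x - p"] unfolding a_def b_def c_def by (simp add: algebra_simps)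
  let ?m = "vector [1, a, b, c, c\<^sup>2 - a * b] :: real^5"
  have "?m \<in> crooked_cone" using x(1) frame_crooked_plane_iff[of a b c] xe by simp
  moreover have "S = ein_pt (frame_map ?m)"
    using x(2) xe ein_embed_null_lift null_lift_frame_point by simp
  ultimately show "S \<in> ein_pt ` frame_map ` {m \<in> crooked_cone. m$1 \<noteq> 0}" by force
next
  fix S assume "S \<in> ein_pt ` frame_map ` {m \<in> crooked_cone. m$1 \<noteq> 0}"
  then obtain m where m: "m \<in> crooked_cone" "m$1 \<noteq> 0" "S = ein_pt (frame_map m)" by auto
  define m' where "m' = (1 / m$1) *\<^sub>R m"
  have m'_cone: "m' \<in> crooked_cone" unfolding m'_def using crooked_cone_scaleR m by simp
  have m'1: "m'$1 = 1" unfolding m'_def using m by simp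
  have "(m'$4)\<^sup>2 = m'$1 * m'$5 + m'$2 * m'$3" using m'_cone unfolding crooked_cone_def by simp
  then have m'v: "m' = vector [1, m'$2, m'$3, m'$4, (m'$4)\<^sup>2 - m'$2 * m'$3]"
    using m'1 by (simp add: vec5_eq_iff)
  define x where "x = p + m'$2 *\<^sub>R f1 + m'$3 *\<^sub>R f2 + m'$4 *\<^sub>R n"
  have "x \<in> frame_crooked_plane" unfolding x_def frame_crooked_plane_iff using m'_cone m'v by simp
  moreover have "ein_embed x = ein_pt (frame_map m')"
    unfolding x_def ein_embed_null_lift null_lift_frame_point using m'v by simp
  moreover have "ein_pt (frame_map m') = S"
    unfolding m'_def frame_map_scaleR using m ein_pt_scaleR by simp
  ultimately show "S \<in> ein_embed ` frame_crooked_plane" by blast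
qed

lemma ein_pt_in_crooked_closure_iff: "ein_pt w \<in> crooked_closure \<longleftrightarrow> w \<in> frame_map ` crooked_cone"
proof
  assume "ein_pt w \<in> crooked_closure"
  then obtain m where m: "m \<in> crooked_cone" "ein_pt (frame_map m) = ein_pt w"
    unfolding crooked_closure_def by auto
  then obtain a where "a \<noteq> 0" "w = a *\<^sub>R frame_map m" by (auto simp: ein_pt_eq_iff)
  then have "w = frame_map (a *\<^sub>R m)" "a *\<^sub>R m \<in> crooked_cone"
    using frame_map_scaleR crooked_cone_scaleR m by auto
  then show "w \<in> frame_map ` crooked_cone" by blast
qed (auto simp: crooked_closure_def)

lemma crooked_closure_subset: "crooked_closure \<subseteq> topspace Ein"
  unfolding crooked_closure_def topspace_Ein using frame_map_crooked_cone by auto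

lemma closedin_crooked_closure: "closedin Ein crooked_closure"
proof -
  obtain g where g: "linear g" "\<And>x. g (frame_map x) = x" "\<And>x. frame_map (g x) = x"
    using linear_injective_isomorphism[OF linear_frame_map inj_frame_map] by blast
  have "frame_map ` crooked_cone = nullcone \<inter> g -` {m. crooked_sides m}"
  proof (intro equalityI subsetI)
    fix w assume "w \<in> frame_map ` crooked_cone"
    then show "w \<in> nullcone \<inter> g -` {m. crooked_sides m}"
      using frame_map_crooked_cone g(2) unfolding crooked_cone_def by auto
  next
    fix w assume w: "w \<in> nullcone \<inter> g -` {m. crooked_sides m}"
    then have "g w \<in> crooked_cone"
      using frame_map_in_nullcone_iff[of "g w"] g(3) unfolding crooked_cone_def by auto
    then show "w \<in> frame_map ` crooked_cone" using g(3)[of w] by force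
  qed
  moreover have "continuous_on nullcone g"
    using g(1) by (simp add: linear_continuous_on linear_linear)
  ultimately have "closedin (top_of_set nullcone) (frame_map ` crooked_cone)"
    using continuous_closedin_preimage[OF _ closed_crooked_sides] by simp
  moreover have "{w \<in> topspace (top_of_set nullcone). ein_pt w \<in> crooked_closure} = frame_map ` crooked_cone"
    using ein_pt_in_crooked_closure_iff frame_map_crooked_cone by auto
  moreover have "closedin (top_of_set nullcone) {w \<in> topspace (top_of_set nullcone). ein_pt w \<in> crooked_closure}
                   \<longleftrightarrow> closedin Ein crooked_closure"
    using quotient_map_Ein crooked_closure_subset unfolding quotient_map_closedin by blast
  ultimately show ?thesis by simp
qed

lemma in_closure_of_finite_part:
  assumes m: "m \<in> crooked_cone"
    and curve: "\<And>r. 0 < r \<Longrightarrow> r < 1 \<Longrightarrow> m + r *\<^sub>R d1 + r\<^sup>2 *\<^sub>R d2 \<in> crooked_cone \<and> (m + r *\<^sub>R d1 + r\<^sup>2 *\<^sub>R d2)$1 \<noteq> 0"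
  shows "ein_pt (frame_map m) \<in> Ein closure_of (ein_pt ` frame_map ` {m \<in> crooked_cone. m$1 \<noteq> 0})"
  unfolding in_closure_of
proof (intro conjI allI impI)
  show "ein_pt (frame_map m) \<in> topspace Ein"
    using crooked_closure_subset m unfolding crooked_closure_def by auto
  fix U assume U: "ein_pt (frame_map m) \<in> U \<and> openin Ein U"
  then have "openin (top_of_set nullcone) {w \<in> nullcone. ein_pt w \<in> U}"
    unfolding Ein_def openin_quot by simp
  then obtain V where V: "open V" "{w \<in> nullcone. ein_pt w \<in> U} = nullcone \<inter> V"
    unfolding openin_open by auto
  have "frame_map m \<in> V" using V U frame_map_crooked_cone m by auto
  let ?c = "\<lambda>r. m + r *\<^sub>R d1 + r\<^sup>2 *\<^sub>R d2"
  have "(?c \<longlongrightarrow> m + 0 *\<^sub>R d1 + 0\<^sup>2 *\<^sub>R d2) (at_right (0::real))"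
    by (intro tendsto_intros)
  moreover have "bounded_linear frame_map"
    using linear_frame_map by (simp add: linear_conv_bounded_linear)
  ultimately have "((\<lambda>r. frame_map (?c r)) \<longlongrightarrow> frame_map m) (at_right (0::real))"
    using bounded_linear.tendsto by fastforce
  then have "\<forall>\<^sub>F r in at_right 0. frame_map (?c r) \<in> V"
    using V(1) \<open>frame_map m \<in> V\<close> by (rule topological_tendstoD)
  moreover have "\<forall>\<^sub>F r in at_right (0::real). 0 < r \<and> r < 1"
    by (simp add: eventually_at_right_field) (auto intro: exI[of _ 1])
  ultimately have "\<forall>\<^sub>F r in at_right (0::real). frame_map (?c r) \<in> V \<and> 0 < r \<and> r < 1"
    by eventually_elim auto
  then obtain r where r: "frame_map (?c r) \<in> V" "0 < r" "r < 1"
    using eventually_happens'[OF trivial_limit_at_right_real] by blast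
  then have "ein_pt (frame_map (?c r)) \<in> U"
    using V(2) curve frame_map_crooked_cone by auto
  then show "\<exists>y. y \<in> ein_pt ` frame_map ` {m \<in> crooked_cone. m$1 \<noteq> 0} \<and> y \<in> U"
    using curve r by blast
qed

lemma ideal_point_in_closure_of_finite_part:
  assumes m: "m \<in> crooked_cone" and m1: "m$1 = 0"
  shows "ein_pt (frame_map m) \<in> Ein closure_of (ein_pt ` frame_map ` {m \<in> crooked_cone. m$1 \<noteq> 0})"
proof -
  have null: "(m$4)\<^sup>2 = m$2 * m$3" and sides: "m$3 = 0 \<or> m$2 = 0 \<or> (m$4 = 0 \<and> m$2 * m$3 \<ge> 0)"
    using m m1 unfolding crooked_cone_def crooked_sides_def by auto
  have m4: "m$4 = 0" using null sides by auto
  have m23: "m$2 * m$3 = 0" using null m4 by simp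
  let ?v = "\<lambda>a b c d e. vector [a, b, c, d, e] :: real^5"
  note stem = conjI[OF stem_point_in_crooked_cone]
  consider (a) "m$5 = 0" | (b) "m$5 \<noteq> 0" "m$2 \<noteq> 0" | (c) "m$5 \<noteq> 0" "m$3 \<noteq> 0"
    | (d) "m$5 \<noteq> 0" "m$2 = 0" "m$3 = 0"
    by blast
  then show ?thesis
  proof cases
    case a
    show ?thesis
      by (rule in_closure_of_finite_part[OF m, of "?v 1 0 0 0 0" 0])
        (rule stem, use a m1 m4 m23 in auto)
  next
    case b
    then have m3: "m$3 = 0" using m23 by simp
    show ?thesis
      by (rule in_closure_of_finite_part[OF m, of "?v (- m$5) 0 ((m$5)\<^sup>2 / m$2) 0 0" 0])
        (rule stem, use b m1 m3 m4 in \<open>auto simp: field_simps power2_eq_square\<close>)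
  next
    case c
    then have m2: "m$2 = 0" using m23 by simp
    show ?thesis
      by (rule in_closure_of_finite_part[OF m, of "?v (- m$5) ((m$5)\<^sup>2 / m$3) 0 0 0" 0])
        (rule stem, use c m1 m2 m4 in \<open>auto simp: field_simps power2_eq_square\<close>)
  next
    case d
    show ?thesis
      by (rule in_closure_of_finite_part[OF m, of "?v 0 \<bar>m$5\<bar> \<bar>m$5\<bar> 0 0" "?v (- m$5) 0 0 0 0"])
        (rule stem, use d m1 m4 in \<open>auto simp: field_simps power2_eq_square\<close>)
  qed
qed

lemma closure_of_ein_embed_frame_crooked_plane:
  "Ein closure_of (ein_embed ` frame_crooked_plane) = crooked_closure"
proof
  show "Ein closure_of (ein_embed ` frame_crooked_plane) \<subseteq> crooked_closure"
    unfolding ein_embed_frame_crooked_plane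
    by (rule closure_of_minimal[OF _ closedin_crooked_closure]) (auto simp: crooked_closure_def)
  show "crooked_closure \<subseteq> Ein closure_of (ein_embed ` frame_crooked_plane)"
    unfolding ein_embed_frame_crooked_plane
  proof
    fix S assume "S \<in> crooked_closure"
    then obtain m where m: "m \<in> crooked_cone" "S = ein_pt (frame_map m)"
      unfolding crooked_closure_def by auto
    show "S \<in> Ein closure_of (ein_pt ` frame_map ` {m \<in> crooked_cone. m$1 \<noteq> 0})"
    proof (cases "m$1 = 0")
      case True
      then show ?thesis using ideal_point_in_closure_of_finite_part m by simp
    next
      case False
      have "ein_pt ` frame_map ` {m \<in> crooked_cone. m$1 \<noteq> 0} \<subseteq> topspace Ein"
        using crooked_closure_subset unfolding crooked_closure_def by auto
      then show ?thesis
        using closure_of_subset m False by blast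
    qed
  qed
qed

lemma preimage_crooked_closure:
  "{S \<in> topspace EinHat. ein_cover S \<in> crooked_closure} = crooked_lift"
proof (intro equalityI subsetI)
  fix S assume "S \<in> {S \<in> topspace EinHat. ein_cover S \<in> crooked_closure}"
  then obtain w where "S = einhat_pt w" "ein_pt w \<in> crooked_closure"
    unfolding topspace_EinHat by auto
  then show "S \<in> crooked_lift"
    unfolding crooked_lift_def ein_pt_in_crooked_closure_iff by blast
next
  fix S assume "S \<in> crooked_lift"
  then obtain m where "m \<in> crooked_cone" "S = einhat_pt (frame_map m)"
    unfolding crooked_lift_def by auto
  then show "S \<in> {S \<in> topspace EinHat. ein_cover S \<in> crooked_closure}"
    unfolding topspace_EinHat crooked_closure_def using frame_map_crooked_cone by auto
qed

end

section \<open>The torus\<close>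

lemma Re_Im_unit_sphere: "z \<in> sphere (0::complex) 1 \<Longrightarrow> (Re z)\<^sup>2 + (Im z)\<^sup>2 = 1"
  using cmod_power2[of z] by simp

lemma compact_space_torus: "compact_space torus"
  unfolding torus_def prod_topology_subtopology_eu
  by (intro compact_space_subtopology) (simp add: compact_Times)

lemma topspace_torus: "topspace torus = sphere 0 1 \<times> sphere 0 1"
  unfolding torus_def prod_topology_subtopology_eu by simp

context crooked_frame
begin

definition torus_param :: "complex \<times> complex \<Rightarrow> real^5" where
  "torus_param z = frame_map (cone_param (Re (fst z)) (Im (fst z)) (Re (snd z)) (Im (snd z)))"

lemma torus_param_crooked_cone:
  "z \<in> topspace torus \<Longrightarrow> torus_param z \<in> frame_map ` crooked_cone"
  unfolding torus_param_def topspace_torus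
  using cone_param_in_crooked_cone Re_Im_unit_sphere by (auto simp: mem_Times_iff)

lemma continuous_map_torus_param: "continuous_map torus (subtopology EinHat crooked_lift) (einhat_pt \<circ> torus_param)"
proof -
  let ?D = "sphere (0::complex) 1 \<times> sphere (0::complex) 1"
  have "continuous_on ?D torus_param"
    unfolding torus_param_def
    by (rule continuous_on_compose2[OF continuous_on_frame_map[of UNIV] continuous_on_cone_param])
       (auto intro!: continuous_intros simp: Re_Im_unit_sphere mem_Times_iff)
  moreover have "torus_param z \<in> nullcone" if "z \<in> ?D" for z
  proof -
    have "torus_param z \<in> frame_map ` crooked_cone"
      using that torus_param_crooked_cone topspace_torus by simp
    then show ?thesis using frame_map_crooked_cone by auto
  qed
  ultimately have "continuous_map (top_of_set ?D) (top_of_set nullcone) torus_param"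
    by (simp add: continuous_map_in_subtopology continuous_map_iff_continuous image_subset_iff)
  then have "continuous_map (top_of_set ?D) EinHat (einhat_pt \<circ> torus_param)"
    using quotient_imp_continuous_map[OF quotient_map_EinHat] by (rule continuous_map_compose)
  moreover have "einhat_pt (torus_param z) \<in> crooked_lift" if "z \<in> ?D" for z
    using that torus_param_crooked_cone topspace_torus unfolding crooked_lift_def by auto
  ultimately show ?thesis unfolding torus_def prod_topology_subtopology_eu
    by (auto simp: continuous_map_in_subtopology)
qed

lemma inj_on_torus_param: "inj_on (einhat_pt \<circ> torus_param) (topspace torus)"
proof (rule inj_onI)
  fix z z' assume z: "z \<in> topspace torus" and z': "z' \<in> topspace torus"
    and "(einhat_pt \<circ> torus_param) z = (einhat_pt \<circ> torus_param) z'"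
  then obtain a where "a > 0" "torus_param z' = a *\<^sub>R torus_param z"
    by (auto simp: einhat_pt_eq_iff)
  then have a: "a > 0" and eq: "cone_param (Re (fst z')) (Im (fst z')) (Re (snd z')) (Im (snd z')) =
      a *\<^sub>R cone_param (Re (fst z)) (Im (fst z)) (Re (snd z)) (Im (snd z))"
    using inj_frame_map unfolding torus_param_def frame_map_scaleR[symmetric] by (auto simp: inj_eq)
  have u: "(Re (fst z))\<^sup>2 + (Im (fst z))\<^sup>2 = 1" "(Re (snd z))\<^sup>2 + (Im (snd z))\<^sup>2 = 1"
    "(Re (fst z'))\<^sup>2 + (Im (fst z'))\<^sup>2 = 1" "(Re (snd z'))\<^sup>2 + (Im (snd z'))\<^sup>2 = 1"
    using z z' Re_Im_unit_sphere unfolding topspace_torus by (auto simp: mem_Times_iff)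
  from cone_param_eq_scaleR[OF u eq] a
  show "z = z'" by (auto simp: prod_eq_iff complex_eq_iff)
qed

lemma image_torus_param: "(einhat_pt \<circ> torus_param) ` topspace torus = crooked_lift"
proof
  show "(einhat_pt \<circ> torus_param) ` topspace torus \<subseteq> crooked_lift"
    using torus_param_crooked_cone unfolding crooked_lift_def by auto
  show "crooked_lift \<subseteq> (einhat_pt \<circ> torus_param) ` topspace torus"
  proof
    fix S assume "S \<in> crooked_lift"
    then obtain m where m: "m \<in> crooked_cone" "S = einhat_pt (frame_map m)"
      unfolding crooked_lift_def by auto
    obtain r c s g h where r: "r > 0" "c\<^sup>2 + s\<^sup>2 = 1" "g\<^sup>2 + h\<^sup>2 = 1" "m = r *\<^sub>R cone_param c s g h"
      using cone_param_surj[OF m(1)] by blast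
    have "S = einhat_pt (torus_param (Complex c s, Complex g h))"
      unfolding torus_param_def using m(2) r einhat_pt_scaleR frame_map_scaleR by simp
    moreover have "(Complex c s, Complex g h) \<in> topspace torus"
      unfolding topspace_torus using r by (simp add: mem_Times_iff norm_complex_def)
    ultimately show "S \<in> (einhat_pt \<circ> torus_param) ` topspace torus" by auto
  qed
qed

theorem crooked_lift_homeomorphic_torus: "subtopology EinHat crooked_lift homeomorphic_space torus"
proof (rule compact_Hausdorff_bijection_homeomorphic_space[OF continuous_map_torus_param
      compact_space_torus _ _ inj_on_torus_param])
  show "Hausdorff_space (subtopology EinHat crooked_lift)"
    using Hausdorff_space_EinHat by (rule Hausdorff_space_subtopology)
  have "crooked_lift \<subseteq> topspace EinHat"
    unfolding crooked_lift_def topspace_EinHat using frame_map_crooked_cone by auto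
  then show "(einhat_pt \<circ> torus_param) ` topspace torus = topspace (subtopology EinHat crooked_lift)"
    using image_torus_param by auto
qed

end

section \<open>The Klein bottle\<close>

lemma klein_orbit_self: "z \<in> klein_orbit z"
  unfolding klein_orbit_def by (auto intro!: exI[of _ 0])

lemma klein_orbitI: "w = ((-1) powi N * fst z + of_int M, snd z + of_int N) \<Longrightarrow> w \<in> klein_orbit z"
  unfolding klein_orbit_def by blast

lemma powi_minus_one: "((-1::real) powi n) = (if even n then 1 else -1)"
  by (simp add: power_int_minus_left)

lemma klein_orbit_subset:
  assumes "z' \<in> klein_orbit z"
  shows "klein_orbit z' \<subseteq> klein_orbit z"
proof
  obtain m n :: int where z': "z' = ((-1) powi n * fst z + of_int m, snd z + of_int n)"
    using assms unfolding klein_orbit_def by auto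
  fix w assume "w \<in> klein_orbit z'"
  then obtain m' n' :: int where w: "w = ((-1) powi n' * fst z' + of_int m', snd z' + of_int n')"
    unfolding klein_orbit_def by auto
  have "(-1::real) powi n' * (-1) powi n = (-1) powi (n' + n)"
    by (simp add: power_int_add)
  then have "w = ((-1) powi (n' + n) * fst z + of_int ((if even n' then m else - m) + m'),
                  snd z + of_int (n' + n))"
    unfolding w z' by (simp add: algebra_simps powi_minus_one)
  then show "w \<in> klein_orbit z" by (rule klein_orbitI)
qed

lemma klein_orbit_sym:
  assumes "z' \<in> klein_orbit z"
  shows "z \<in> klein_orbit z'"
proof -
  obtain m n :: int where z': "z' = ((-1) powi n * fst z + of_int m, snd z + of_int n)"
    using assms unfolding klein_orbit_def by auto
  have "z = ((-1) powi (- n) * fst z' + of_int (- (if even n then m else - m)), snd z' + of_int (- n))"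
    unfolding z' by (simp add: algebra_simps powi_minus_one)
  then show ?thesis by (rule klein_orbitI)
qed

lemma klein_orbit_eq_iff: "klein_orbit z' = klein_orbit z \<longleftrightarrow> z' \<in> klein_orbit z"
  using klein_orbit_subset klein_orbit_sym klein_orbit_self by blast

lemma quotient_map_klein_bottle: "quotient_map euclidean klein_bottle klein_orbit"
  unfolding klein_bottle_def by (rule quotient_map_quot)

lemma topspace_klein_bottle: "topspace klein_bottle = range klein_orbit"
  unfolding klein_bottle_def by simp

lemma compact_space_klein_bottle: "compact_space klein_bottle"
proof -
  let ?B = "cbox (0::real, 0::real) (1, 1)"
  have "range klein_orbit \<subseteq> klein_orbit ` ?B"
  proof
    fix K assume "K \<in> range klein_orbit"
    then obtain x y where K: "K = klein_orbit (x, y)" by auto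
    define n where "n = - \<lfloor>y\<rfloor>"
    define x' where "x' = (-1) powi n * x"
    define m where "m = - \<lfloor>x'\<rfloor>"
    let ?z = "(x' + of_int m, y + of_int n)"
    have "?z \<in> klein_orbit (x, y)" unfolding klein_orbit_def x'_def by auto
    then have "klein_orbit ?z = K" using K klein_orbit_eq_iff by simp
    moreover have "?z \<in> ?B"
    proof -
      have "of_int \<lfloor>x'\<rfloor> \<le> x'" "x' < of_int \<lfloor>x'\<rfloor> + 1" "of_int \<lfloor>y\<rfloor> \<le> y" "y < of_int \<lfloor>y\<rfloor> + 1"
        by (simp_all add: of_int_floor_le real_of_int_floor_add_one_gt)
      then show ?thesis unfolding m_def n_def cbox_Pair_eq by (simp, linarith)
    qed
    ultimately show "K \<in> klein_orbit ` ?B" by blast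
  qed
  moreover have "compactin klein_bottle (klein_orbit ` ?B)"
    by (rule image_compactin[OF _ quotient_imp_continuous_map[OF quotient_map_klein_bottle]]) simp
  ultimately show ?thesis
    unfolding compact_space_def topspace_klein_bottle
    by (metis compactin_subset_topspace image_mono subset_antisym subset_UNIV topspace_klein_bottle)
qed

lemma klein_orbitI_angles:
  assumes e: "e = 1 \<or> e = -1"
    and y: "cos (pi * y') = e * cos (pi * y)" "sin (pi * y') = e * sin (pi * y)"
    and x: "sin (2 * pi * x') = e * sin (2 * pi * x)" "cos (2 * pi * x') = cos (2 * pi * x)"
  shows "(x', y') \<in> klein_orbit (x, y)"
  using e
proof
  assume "e = 1"
  then have "cos (pi * y') = cos (pi * y)" "sin (pi * y') = sin (pi * y)"
    "sin (2 * pi * x') = sin (2 * pi * x)" "cos (2 * pi * x') = cos (2 * pi * x)"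
    using x y by simp_all
  then obtain k j :: int where "pi * y' = pi * y + 2 * pi * k" "2 * pi * x' = 2 * pi * x + 2 * pi * j"
    using sin_cos_eq_iff by metis
  then have "pi * y' = pi * (y + of_int (2 * k))" "2 * pi * x' = 2 * pi * (x + of_int j)"
    by (simp_all add: algebra_simps)
  then have "(x', y') = ((-1) powi (2 * k) * x + of_int j, y + of_int (2 * k))"
    by (simp add: powi_minus_one)
  then show ?thesis using klein_orbitI[where N = "2 * k" and M = j and z = "(x, y)"] by simp
next
  assume "e = -1"
  then have "cos (pi * y') = cos (pi * y + pi)" "sin (pi * y') = sin (pi * y + pi)"
    "sin (2 * pi * x') = sin (- (2 * pi * x))" "cos (2 * pi * x') = cos (- (2 * pi * x))"
    using x y by simp_all
  then obtain k j :: int where "pi * y' = (pi * y + pi) + 2 * pi * k" "2 * pi * x' = - (2 * pi * x) + 2 * pi * j"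
    using sin_cos_eq_iff by metis
  then have "pi * y' = pi * (y + of_int (2 * k + 1))" "2 * pi * x' = 2 * pi * (- x + of_int j)"
    by (simp_all add: algebra_simps)
  then have "(x', y') = ((-1) powi (2 * k + 1) * x + of_int j, y + of_int (2 * k + 1))"
    by (simp add: powi_minus_one)
  then show ?thesis using klein_orbitI[where N = "2 * k + 1" and M = j and z = "(x, y)"] by simp
qed

context crooked_frame
begin

text \<open>The half angle pi t makes the deck transformations with odd n act on the crooked cone as the
  sign change (klein_param_orbit), so that ein_pt \<circ> klein_param descends to the Klein bottle.\<close>

definition klein_param :: "real \<times> real \<Rightarrow> real^5" where
  "klein_param z = frame_map (cone_param (cos (pi * snd z)) (sin (pi * snd z))
                                         (- sin (2 * pi * fst z)) (cos (2 * pi * fst z)))"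

lemma klein_param_orbit:
  "klein_param ((-1) powi N * x + of_int m, y + of_int N) = (if even N then 1 else -1) *\<^sub>R klein_param (x, y)"
proof -
  have shift: "sin (t + 2 * pi * of_int k) = sin t" "cos (t + 2 * pi * of_int k) = cos t" for t k
    using sin_cos_eq_iff[of "t + 2 * pi * of_int k" t] by auto
  show ?thesis
  proof (cases "even N")
    case True
    then obtain K where K: "N = 2 * K" by (auto elim: evenE)
    have sign: "(-1::real) powi N * x = x" using True by (simp add: powi_minus_one)
    have t: "pi * (y + of_int N) = pi * y + 2 * pi * of_int K" unfolding K by (simp add: algebra_simps)
    have s: "2 * pi * (x + of_int m) = 2 * pi * x + 2 * pi * of_int m" by (simp add: algebra_simps)
    show ?thesis
      using True unfolding klein_param_def fst_conv snd_conv sign t s shift by simp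
  next
    case False
    then obtain K where K: "N = 2 * K + 1" by (auto elim: oddE)
    have sign: "(-1::real) powi N * x = - x" using False by (simp add: powi_minus_one)
    have t: "pi * (y + of_int N) = (pi * y + pi) + 2 * pi * of_int K" unfolding K by (simp add: algebra_simps)
    have s: "2 * pi * (- x + of_int m) = - (2 * pi * x) + 2 * pi * of_int m" by (simp add: algebra_simps)
    have "klein_param ((-1) powi N * x + of_int m, y + of_int N) =
        frame_map (cone_param (- cos (pi * y)) (- sin (pi * y)) (- (- sin (2 * pi * x))) (cos (2 * pi * x)))"
      unfolding klein_param_def fst_conv snd_conv sign t s shift by simp
    also have "\<dots> = - klein_param (x, y)"
      unfolding klein_param_def cone_param_uminus using frame_map_scaleR[of "-1"] by simp
    finally show ?thesis using False by simp
  qed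
qed

lemma ein_pt_klein_param_eq_iff:
  "ein_pt (klein_param z') = ein_pt (klein_param z) \<longleftrightarrow> z' \<in> klein_orbit z"
proof
  assume "z' \<in> klein_orbit z"
  then obtain m N :: int where "z' = ((-1) powi N * fst z + of_int m, snd z + of_int N)"
    unfolding klein_orbit_def by auto
  then show "ein_pt (klein_param z') = ein_pt (klein_param z)"
    using klein_param_orbit[of N "fst z" m "snd z"] ein_pt_scaleR by simp
next
  obtain x y x' y' where z: "z = (x, y)" and z': "z' = (x', y')" by fastforce
  assume "ein_pt (klein_param z') = ein_pt (klein_param z)"
  then obtain a where "klein_param (x', y') = a *\<^sub>R klein_param (x, y)"
    using ein_pt_eq_iff[of "klein_param (x, y)" "klein_param (x', y')"] unfolding z z' by auto
  then have "cone_param (cos (pi * y')) (sin (pi * y')) (- sin (2 * pi * x')) (cos (2 * pi * x')) =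
             a *\<^sub>R cone_param (cos (pi * y)) (sin (pi * y)) (- sin (2 * pi * x)) (cos (2 * pi * x))"
    using inj_frame_map unfolding klein_param_def frame_map_scaleR[symmetric] by (auto simp: inj_eq)
  from cone_param_eq_scaleR[OF _ _ _ _ this]
  have "(a = 1 \<and> cos (pi * y') = cos (pi * y) \<and> sin (pi * y') = sin (pi * y) \<and>
         sin (2 * pi * x') = sin (2 * pi * x) \<and> cos (2 * pi * x') = cos (2 * pi * x)) \<or>
        (a = -1 \<and> cos (pi * y') = - cos (pi * y) \<and> sin (pi * y') = - sin (pi * y) \<and>
         sin (2 * pi * x') = - sin (2 * pi * x) \<and> cos (2 * pi * x') = cos (2 * pi * x))"
    by auto
  then have "(a = 1 \<or> a = -1) \<and> cos (pi * y') = a * cos (pi * y) \<and> sin (pi * y') = a * sin (pi * y) \<and>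
      sin (2 * pi * x') = a * sin (2 * pi * x) \<and> cos (2 * pi * x') = cos (2 * pi * x)"
    by auto
  then show "z' \<in> klein_orbit z" unfolding z z' using klein_orbitI_angles by blast
qed

lemma continuous_map_klein_param: "continuous_map euclidean Ein (ein_pt \<circ> klein_param)"
proof -
  have "continuous_on UNIV klein_param"
    unfolding klein_param_def
    by (rule continuous_on_compose2[OF continuous_on_frame_map[of UNIV] continuous_on_cone_param])
       (auto intro!: continuous_intros)
  moreover have "klein_param z \<in> nullcone" for z
    unfolding klein_param_def by (intro frame_map_crooked_cone cone_param_in_crooked_cone) simp_all
  ultimately have "continuous_map euclidean (top_of_set nullcone) klein_param"
    by (simp add: continuous_map_in_subtopology)
  then show ?thesis
    using quotient_imp_continuous_map[OF quotient_map_Ein] by (rule continuous_map_compose)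
qed

lemma image_klein_param: "range (ein_pt \<circ> klein_param) = crooked_closure"
proof
  show "range (ein_pt \<circ> klein_param) \<subseteq> crooked_closure"
    unfolding crooked_closure_def klein_param_def using cone_param_in_crooked_cone by auto
  show "crooked_closure \<subseteq> range (ein_pt \<circ> klein_param)"
  proof
    fix S assume "S \<in> crooked_closure"
    then obtain m where m: "m \<in> crooked_cone" "S = ein_pt (frame_map m)"
      unfolding crooked_closure_def by auto
    obtain r c s g h where r: "r > 0" "c\<^sup>2 + s\<^sup>2 = 1" "g\<^sup>2 + h\<^sup>2 = 1" "m = r *\<^sub>R cone_param c s g h"
      using cone_param_surj[OF m(1)] by blast
    obtain t where t: "c = cos t" "s = sin t" using sincos_total_2pi[OF r(2)] by metis
    have "h\<^sup>2 + (- g)\<^sup>2 = 1" using r(3) by simp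
    then obtain u where u: "h = cos u" "g = - sin u" using sincos_total_2pi by (metis minus_minus)
    have "klein_param (u / (2 * pi), t / pi) = frame_map (cone_param c s g h)"
      unfolding klein_param_def using t u by simp
    then have "S = ein_pt (klein_param (u / (2 * pi), t / pi))"
      using m(2) r(1,4) frame_map_scaleR ein_pt_scaleR by simp
    then show "S \<in> range (ein_pt \<circ> klein_param)" by auto
  qed
qed

theorem crooked_closure_homeomorphic_klein_bottle:
  "subtopology Ein crooked_closure homeomorphic_space klein_bottle"
proof -
  have inv: "(ein_pt \<circ> klein_param) z = (ein_pt \<circ> klein_param) z'"
    if "z \<in> topspace euclidean" "z' \<in> topspace euclidean" "klein_orbit z = klein_orbit z'" for z z'
    using that(3) unfolding o_apply ein_pt_klein_param_eq_iff klein_orbit_eq_iff[symmetric] .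
  obtain k where k: "continuous_map klein_bottle Ein k"
    "k ` topspace klein_bottle = (ein_pt \<circ> klein_param) ` topspace euclidean"
    "\<And>z. z \<in> topspace euclidean \<Longrightarrow> k (klein_orbit z) = (ein_pt \<circ> klein_param) z"
    using quotient_map_lift_exists[OF quotient_map_klein_bottle continuous_map_klein_param inv] by blast
  have image: "k ` topspace klein_bottle = crooked_closure"
    using k(2) image_klein_param by simp
  show ?thesis
  proof (rule compact_Hausdorff_bijection_homeomorphic_space[OF _ compact_space_klein_bottle])
    show "continuous_map klein_bottle (subtopology Ein crooked_closure) k"
      using k(1) image by (auto simp: continuous_map_in_subtopology)
    show "Hausdorff_space (subtopology Ein crooked_closure)"
      using Hausdorff_space_Ein by (rule Hausdorff_space_subtopology)
    show "k ` topspace klein_bottle = topspace (subtopology Ein crooked_closure)"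
      using image crooked_closure_subset by auto
    show "inj_on k (topspace klein_bottle)"
    proof (rule inj_onI)
      fix K K' assume "K \<in> topspace klein_bottle" "K' \<in> topspace klein_bottle" and eq: "k K = k K'"
      then obtain z z' where K: "K = klein_orbit z" "K' = klein_orbit z'"
        unfolding topspace_klein_bottle by blast
      have "ein_pt (klein_param z) = ein_pt (klein_param z')"
        using eq k(3)[of z] k(3)[of z'] unfolding K by simp
      then show "K = K'"
        unfolding K ein_pt_klein_param_eq_iff klein_orbit_eq_iff .
    qed
  qed
qed

end

section \<open>Normal form of a crooked plane\<close>

lemma span_pair_iff: "(x::real^3) \<in> span {a, b} \<longleftrightarrow> (\<exists>u v. x = u *\<^sub>R a + v *\<^sub>R b)"
proof -
  have "x \<in> span {a, b} \<longleftrightarrow> (\<exists>k. x - k *\<^sub>R a \<in> span {b})"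
    unfolding span_insert[of a "{b}"] by simp
  also have "\<dots> \<longleftrightarrow> (\<exists>k v. x - k *\<^sub>R a = v *\<^sub>R b)"
    unfolding span_singleton by auto
  also have "\<dots> \<longleftrightarrow> (\<exists>u v. x = u *\<^sub>R a + v *\<^sub>R b)"
    by (metis add.commute diff_add_cancel add_diff_cancel)
  finally show ?thesis .
qed

lemma stem_scaleR: "t \<noteq> 0 \<Longrightarrow> stem p v1 (t *\<^sub>R v2) = stem p v1 v2"
proof -
  assume t: "t \<noteq> 0"
  have "(\<exists>u v. w = u *\<^sub>R v1 + v *\<^sub>R (t *\<^sub>R v2)) \<longleftrightarrow> (\<exists>u v. w = u *\<^sub>R v1 + v *\<^sub>R v2)" for w
    using t by (metis (no_types, opaque_lifting) scaleR_scaleR nonzero_divide_eq_eq)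
  then show ?thesis unfolding stem_def span_pair_iff by simp
qed

lemma geod_scaleR: "t \<noteq> 0 \<Longrightarrow> geod p (t *\<^sub>R v) = geod p v"
  unfolding geod_def
proof (intro equalityI subsetI)
  fix x assume t: "t \<noteq> 0"
  { assume "x \<in> {p + s *\<^sub>R t *\<^sub>R v |s. True}"
    then obtain s where "x = p + s *\<^sub>R t *\<^sub>R v" by auto
    then show "x \<in> {p + s *\<^sub>R v |s. True}" by (intro CollectI exI[of _ "s * t"]) auto }
  { assume "x \<in> {p + s *\<^sub>R v |s. True}"
    then obtain s where "x = p + s *\<^sub>R v" by auto
    then show "x \<in> {p + s *\<^sub>R t *\<^sub>R v |s. True}" using t by (intro CollectI exI[of _ "s / t"]) auto }
qed

lemma wing_condition_scaleR:
  assumes t: "t \<noteq> 0" and P: "\<And>k x. k > 0 \<Longrightarrow> P (k * x) \<longleftrightarrow> P x"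
  shows "(\<forall>u. timelike u \<and> mink u (t *\<^sub>R v) < 0 \<longrightarrow> P (det3 u (t *\<^sub>R v) w))
     \<longleftrightarrow> (\<forall>u. timelike u \<and> mink u v < 0 \<longrightarrow> P (det3 u v w))"
proof -
  have ss: "sgn t * sgn t = 1" using t by (simp add: sgn_real_def)
  have flip: "timelike (sgn t *\<^sub>R u) \<and> mink (sgn t *\<^sub>R u) v < 0 \<longleftrightarrow> timelike u \<and> mink u (t *\<^sub>R v) < 0"
    and det: "det3 u (t *\<^sub>R v) w = \<bar>t\<bar> * det3 (sgn t *\<^sub>R u) v w" for u
  proof -
    have "\<bar>t\<bar> * mink (sgn t *\<^sub>R u) v = (\<bar>t\<bar> * sgn t) * mink u v"
      by (simp add: mink_linear)
    then have "mink u (t *\<^sub>R v) = \<bar>t\<bar> * mink (sgn t *\<^sub>R u) v"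
      by (simp add: mink_linear abs_mult_sgn)
    then show "timelike (sgn t *\<^sub>R u) \<and> mink (sgn t *\<^sub>R u) v < 0 \<longleftrightarrow> timelike u \<and> mink u (t *\<^sub>R v) < 0"
      using t ss unfolding timelike_def by (simp add: mink_linear zero_less_mult_iff mult_less_0_iff algebra_simps)
    have "\<bar>t\<bar> * det3 (sgn t *\<^sub>R u) v w = (\<bar>t\<bar> * sgn t) * det3 u v w"
      by (simp add: det3_linear)
    then show "det3 u (t *\<^sub>R v) w = \<bar>t\<bar> * det3 (sgn t *\<^sub>R u) v w"
      by (simp add: det3_linear abs_mult_sgn)
  qed
  have at: "\<bar>t\<bar> > 0" using t by simp
  show ?thesis
  proof
    assume H: "\<forall>u. timelike u \<and> mink u (t *\<^sub>R v) < 0 \<longrightarrow> P (det3 u (t *\<^sub>R v) w)"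
    show "\<forall>u. timelike u \<and> mink u v < 0 \<longrightarrow> P (det3 u v w)"
    proof (intro allI impI)
      fix u assume "timelike u \<and> mink u v < 0"
      then have "timelike (sgn t *\<^sub>R u) \<and> mink (sgn t *\<^sub>R u) (t *\<^sub>R v) < 0"
        using flip[of "sgn t *\<^sub>R u"] ss by simp
      then have "P (det3 (sgn t *\<^sub>R u) (t *\<^sub>R v) w)" using H by blast
      then have "P (\<bar>t\<bar> * det3 u v w)" using det[of "sgn t *\<^sub>R u"] ss by simp
      then show "P (det3 u v w)" using P[OF at] by simp
    qed
  next
    assume H: "\<forall>u. timelike u \<and> mink u v < 0 \<longrightarrow> P (det3 u v w)"
    show "\<forall>u. timelike u \<and> mink u (t *\<^sub>R v) < 0 \<longrightarrow> P (det3 u (t *\<^sub>R v) w)"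
      using H flip det P[OF at] by simp
  qed
qed

lemma wing_plus_scaleR: "t \<noteq> 0 \<Longrightarrow> wing_plus p (t *\<^sub>R v) = wing_plus p v"
  unfolding wing_plus_def using wing_condition_scaleR[of t "\<lambda>x. 0 < x"]
  by (simp add: mink_linear zero_less_mult_iff)

lemma wing_minus_scaleR: "t \<noteq> 0 \<Longrightarrow> wing_minus p (t *\<^sub>R v) = wing_minus p v"
  unfolding wing_minus_def using wing_condition_scaleR[of t "\<lambda>x. x < 0"]
  by (simp add: mink_linear mult_less_0_iff)

lemma crooked_frame_swap: "crooked_frame f1 f2 n \<Longrightarrow> crooked_frame f2 f1 (- n)"
  unfolding crooked_frame_def by (auto simp: mink_linear mink_sym)

context crooked_frame
begin

lemma stem_frame: "stem p f1 f2 = {p + a *\<^sub>R f1 + b *\<^sub>R f2 | a b. a * b \<ge> 0}"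
proof -
  have "mink (a *\<^sub>R f1 + b *\<^sub>R f2) (a *\<^sub>R f1 + b *\<^sub>R f2) = - (a * b)" for a b
    by (simp add: mink_linear frame_rels algebra_simps)
  then show ?thesis
    unfolding stem_def span_pair_iff by (auto simp: add.assoc; blast)
qed

lemma det3_wing_f1: "det3 u f1 (a *\<^sub>R f1 + c *\<^sub>R n) = (-2 * mink u f1) * (c * det3 f2 f1 n)"
proof -
  have coeff: "det3 (\<alpha> *\<^sub>R f1 + \<beta> *\<^sub>R f2 + \<gamma> *\<^sub>R n) f1 n = \<beta> * det3 f2 f1 n" for \<alpha> \<beta> \<gamma>
    by (simp add: det3_linear det3_swap12[of f1 f2])
  have "det3 u f1 n = det3 ((-2 * mink u f2) *\<^sub>R f1 + (-2 * mink u f1) *\<^sub>R f2 + mink u n *\<^sub>R n) f1 n"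
    by (rule arg_cong[where f = "\<lambda>x. det3 x f1 n"]) (rule frame_decomp)
  also have "\<dots> = (-2 * mink u f1) * det3 f2 f1 n" by (rule coeff)
  finally show ?thesis by (simp add: det3_linear)
qed

lemma wing_f1:
  "wing_plus p f1 = {p + a *\<^sub>R f1 + c *\<^sub>R n | a c. 0 < c * det3 f2 f1 n}"
  "wing_minus p f1 = {p + a *\<^sub>R f1 + c *\<^sub>R n | a c. c * det3 f2 f1 n < 0}"
proof -
  let ?d = "det3 f2 f1 n"
  have orth: "mink w f1 = 0 \<longleftrightarrow> (\<exists>a c. w = a *\<^sub>R f1 + c *\<^sub>R n)" for w
  proof
    assume "mink w f1 = 0"
    then have "w = (-2 * mink w f2) *\<^sub>R f1 + mink w n *\<^sub>R n" using frame_decomp[of w] by simp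
    then show "\<exists>a c. w = a *\<^sub>R f1 + c *\<^sub>R n" by blast
  qed (auto simp: mink_linear frame_rels)
  note det = det3_wing_f1
  have u0: "timelike (f1 + f2)" "mink (f1 + f2) f1 < 0" "-2 * mink (f1 + f2) f1 = 1"
    unfolding timelike_def by (simp_all add: mink_linear frame_rels)
  have sign: "(\<forall>u. timelike u \<and> mink u f1 < 0 \<longrightarrow> P (det3 u f1 (a *\<^sub>R f1 + c *\<^sub>R n))) \<longleftrightarrow> P (c * ?d)"
    if P: "\<And>k x. k > 0 \<Longrightarrow> P (k * x) \<longleftrightarrow> P x" for P a c
  proof
    assume "\<forall>u. timelike u \<and> mink u f1 < 0 \<longrightarrow> P (det3 u f1 (a *\<^sub>R f1 + c *\<^sub>R n))"
    then have "P (det3 (f1 + f2) f1 (a *\<^sub>R f1 + c *\<^sub>R n))" using u0(1,2) by blast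
    then show "P (c * ?d)" using u0(3) det[of "f1 + f2"] by simp
  next
    assume Pcd: "P (c * ?d)"
    show "\<forall>u. timelike u \<and> mink u f1 < 0 \<longrightarrow> P (det3 u f1 (a *\<^sub>R f1 + c *\<^sub>R n))"
    proof (intro allI impI)
      fix u assume "timelike u \<and> mink u f1 < 0"
      then have "-2 * mink u f1 > 0" by simp
      then show "P (det3 u f1 (a *\<^sub>R f1 + c *\<^sub>R n))" unfolding det using P Pcd by blast
    qed
  qed
  show "wing_plus p f1 = {p + a *\<^sub>R f1 + c *\<^sub>R n | a c. 0 < c * ?d}"
    unfolding wing_plus_def using orth sign[of "\<lambda>x. 0 < x"]
    by (auto simp: add.assoc zero_less_mult_iff) (metis add.assoc)+
  show "wing_minus p f1 = {p + a *\<^sub>R f1 + c *\<^sub>R n | a c. c * ?d < 0}"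
    unfolding wing_minus_def using orth sign[of "\<lambda>x. x < 0"]
    by (auto simp: add.assoc mult_less_0_iff) (metis add.assoc)+
qed

lemma wing_f2:
  "wing_plus p f2 = {p + b *\<^sub>R f2 + c *\<^sub>R n | b c. c * det3 f2 f1 n < 0}"
  "wing_minus p f2 = {p + b *\<^sub>R f2 + c *\<^sub>R n | b c. 0 < c * det3 f2 f1 n}"
proof -
  interpret swapped: crooked_frame p f2 f1 "- n"
    using crooked_frame_swap crooked_frame_axioms by blast
  have d: "det3 f1 f2 (- n) = det3 f2 f1 n"
    by (simp add: det3_uminus det3_swap12[of f1 f2])
  have flip: "{p + b *\<^sub>R f2 + c *\<^sub>R (- n) | b c. Q c} = {p + b *\<^sub>R f2 + c *\<^sub>R n | b c. Q (- c)}" for Q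
  proof (intro equalityI subsetI)
    fix x assume "x \<in> {p + b *\<^sub>R f2 + c *\<^sub>R (- n) | b c. Q c}"
    then obtain b c where "x = p + b *\<^sub>R f2 + (- c) *\<^sub>R n" "Q (- (- c))" by auto
    then show "x \<in> {p + b *\<^sub>R f2 + c *\<^sub>R n | b c. Q (- c)}" by blast
  next
    fix x assume "x \<in> {p + b *\<^sub>R f2 + c *\<^sub>R n | b c. Q (- c)}"
    then obtain b c where "x = p + b *\<^sub>R f2 + (- c) *\<^sub>R (- n)" "Q (- c)" by auto
    then show "x \<in> {p + b *\<^sub>R f2 + c *\<^sub>R (- n) | b c. Q c}" by blast
  qed
  show "wing_plus p f2 = {p + b *\<^sub>R f2 + c *\<^sub>R n | b c. c * det3 f2 f1 n < 0}"
    unfolding swapped.wing_f1 d flip by (simp add: mult_less_0_iff zero_less_mult_iff)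
  show "wing_minus p f2 = {p + b *\<^sub>R f2 + c *\<^sub>R n | b c. 0 < c * det3 f2 f1 n}"
    unfolding swapped.wing_f1 d flip by (simp add: mult_less_0_iff zero_less_mult_iff)
qed

lemma frame_crooked_plane_eq:
  "0 < det3 f2 f1 n \<Longrightarrow> frame_crooked_plane = wing_plus p f1 \<union> stem p f1 f2 \<union> wing_plus p f2"
  "det3 f2 f1 n < 0 \<Longrightarrow> frame_crooked_plane = wing_minus p f1 \<union> stem p f1 f2 \<union> wing_minus p f2"
  unfolding frame_crooked_plane_def wing_f1 wing_f2 stem_frame
  by (simp_all add: zero_less_mult_iff mult_less_0_iff)

end

definition lorentz_cross :: "real^3 \<Rightarrow> real^3 \<Rightarrow> real^3" where
  "lorentz_cross a b = vector [a$2 * b$3 - a$3 * b$2, a$3 * b$1 - a$1 * b$3, a$2 * b$1 - a$1 * b$2]"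

lemma lorentz_cross:
  "mink (lorentz_cross a b) a = 0" "mink (lorentz_cross a b) b = 0"
  "mink (lorentz_cross a b) (lorentz_cross a b) = (mink a b)\<^sup>2 - mink a a * mink b b"
  "det3 b a (lorentz_cross a b) = - mink (lorentz_cross a b) (lorentz_cross a b)"
  unfolding lorentz_cross_def mink_def det3_expand by (simp_all add: algebra_simps power2_eq_square)

lemma lightlike_orthogonal_parallel:
  assumes l1: "lightlike v1" and l2: "lightlike v2" and o: "mink v1 v2 = 0"
  shows "\<exists>t. v2 = t *\<^sub>R v1"
proof -
  define a where "a = v1$1" define b where "b = v1$2" define c where "c = v1$3"
  define a' where "a' = v2$1" define b' where "b' = v2$2" define c' where "c' = v2$3"
  have n1: "a\<^sup>2 + b\<^sup>2 = c\<^sup>2" using l1 unfolding lightlike_def mink_def a_def b_def c_def by (simp add: power2_eq_square)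
  have n2: "a'\<^sup>2 + b'\<^sup>2 = c'\<^sup>2" using l2 unfolding lightlike_def mink_def a'_def b'_def c'_def by (simp add: power2_eq_square)
  have oo: "a * a' + b * b' = c * c'" using o unfolding mink_def a_def b_def c_def a'_def b'_def c'_def by simp
  have c0: "c \<noteq> 0"
  proof
    assume "c = 0"
    then have "a = 0" "b = 0" using n1 by (auto simp: sum_power2_eq_zero_iff)
    then have "v1 = 0" using \<open>c = 0\<close> unfolding a_def b_def c_def by (simp add: vec3_eq_iff)
    then show False using l1 unfolding lightlike_def by simp
  qed
  have "(a' * c - a * c')\<^sup>2 + (b' * c - b * c')\<^sup>2
          = c\<^sup>2 * (a'\<^sup>2 + b'\<^sup>2) + c'\<^sup>2 * (a\<^sup>2 + b\<^sup>2) - 2 * c * c' * (a * a' + b * b')"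
    by (simp add: algebra_simps power2_eq_square)
  also have "\<dots> = 0" unfolding n1 n2 oo by (simp add: algebra_simps power2_eq_square)
  finally have "a' * c - a * c' = 0" "b' * c - b * c' = 0" by (auto simp: sum_power2_eq_zero_iff)
  then have "a' = (c' / c) * a" "b' = (c' / c) * b" "c' = (c' / c) * c" using c0 by (auto simp: field_simps)
  then have "v2 = (c' / c) *\<^sub>R v1" unfolding a_def b_def c_def a'_def b'_def c'_def by (simp add: vec3_eq_iff)
  then show ?thesis by blast
qed

lemma null_pair_crooked_frame:
  assumes f11: "mink f1 f1 = 0" and f22: "mink f2 f2 = 0" and f12: "mink f1 f2 = -1/2"
  shows "\<exists>n. crooked_frame f1 f2 n \<and> 0 < det3 f2 f1 n"
    and "\<exists>n. crooked_frame f1 f2 n \<and> det3 f2 f1 n < 0"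
proof -
  define n0 where "n0 = lorentz_cross f1 f2"
  have n0: "mink n0 f1 = 0" "mink n0 f2 = 0" "mink n0 n0 = 1/4" "det3 f2 f1 n0 = - 1/4"
    unfolding n0_def lorentz_cross(4) using lorentz_cross[of f1 f2] f11 f22 f12
    by (simp_all add: power2_eq_square)
  have frame: "crooked_frame f1 f2 (r *\<^sub>R n0)" if "r = 2 \<or> r = -2" for r
    unfolding crooked_frame_def using f11 f22 f12 n0 that by (auto simp: mink_linear)
  show "\<exists>n. crooked_frame f1 f2 n \<and> 0 < det3 f2 f1 n"
    using frame[of "-2"] n0(4) by (intro exI[of _ "(-2) *\<^sub>R n0"]) (simp add: det3_linear det3_uminus)
  show "\<exists>n. crooked_frame f1 f2 n \<and> det3 f2 f1 n < 0"
    using frame[of 2] n0(4) by (intro exI[of _ "2 *\<^sub>R n0"]) (simp add: det3_linear)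
qed

lemma crooked_plane_frame:
  assumes "crooked_plane C"
  shows "\<exists>p f1 f2 n. crooked_frame f1 f2 n \<and> C = crooked_frame.frame_crooked_plane p f1 f2 n"
proof -
  obtain p v1 v2 where l1: "lightlike v1" and l2: "lightlike v2" and g: "geod p v1 \<noteq> geod p v2"
    and C: "C = wing_plus p v1 \<union> stem p v1 v2 \<union> wing_plus p v2 \<or>
            C = wing_minus p v1 \<union> stem p v1 v2 \<union> wing_minus p v2"
    using assms unfolding crooked_plane_def by blast
  define k where "k = mink v1 v2"
  have k0: "k \<noteq> 0"
  proof
    assume "k = 0"
    then obtain t where t: "v2 = t *\<^sub>R v1" using lightlike_orthogonal_parallel[OF l1 l2] unfolding k_def by blast
    have "t \<noteq> 0" using l2 t unfolding lightlike_def by auto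
    then show False using g t geod_scaleR by simp
  qed
  define f2 where "f2 = (- 1 / (2 * k)) *\<^sub>R v2"
  have v2: "v2 = (- 2 * k) *\<^sub>R f2" and mu: "- 2 * k \<noteq> 0" unfolding f2_def using k0 by simp_all
  have "mink v1 v1 = 0" "mink f2 f2 = 0" "mink v1 f2 = -1/2"
    using l1 l2 k0 unfolding f2_def lightlike_def by (simp_all add: mink_linear k_def[symmetric])
  note frames = null_pair_crooked_frame[OF this]
  from C show ?thesis
  proof
    assume Cp: "C = wing_plus p v1 \<union> stem p v1 v2 \<union> wing_plus p v2"
    obtain n where n: "crooked_frame v1 f2 n" "0 < det3 f2 v1 n" using frames(1) by blast
    have "C = crooked_frame.frame_crooked_plane p v1 f2 n"
      unfolding crooked_frame.frame_crooked_plane_eq(1)[OF n] Cp v2 stem_scaleR[OF mu] wing_plus_scaleR[OF mu] ..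
    then show ?thesis using n(1) by blast
  next
    assume Cm: "C = wing_minus p v1 \<union> stem p v1 v2 \<union> wing_minus p v2"
    obtain n where n: "crooked_frame v1 f2 n" "det3 f2 v1 n < 0" using frames(2) by blast
    have "C = crooked_frame.frame_crooked_plane p v1 f2 n"
      unfolding crooked_frame.frame_crooked_plane_eq(2)[OF n] Cm v2 stem_scaleR[OF mu] wing_minus_scaleR[OF mu] ..
    then show ?thesis using n(1) by blast
  qed
qed

theorem mainTheorem1:
  fixes C :: "(real^3) set"
  assumes "crooked_plane C"
  defines "Cbar \<equiv> Ein closure_of (ein_embed ` C)"
  defines "L \<equiv> {S \<in> topspace EinHat. ein_cover S \<in> Cbar}"
  shows "subtopology Ein Cbar homeomorphic_space klein_bottle \<and>
         double_covering_map (subtopology EinHat L) (subtopology Ein Cbar) ein_cover \<and>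
         subtopology EinHat L homeomorphic_space torus"
proof -
  obtain p f1 f2 n where frame: "crooked_frame f1 f2 n"
    and C: "C = crooked_frame.frame_crooked_plane p f1 f2 n"
    using crooked_plane_frame[OF assms(1)] by blast
  interpret crooked_frame p f1 f2 n by (rule frame)
  have Cbar: "Cbar = crooked_closure"
    unfolding Cbar_def C by (rule closure_of_ein_embed_frame_crooked_plane)
  have L: "L = crooked_lift"
    unfolding L_def Cbar by (rule preimage_crooked_closure)
  have "double_covering_map (subtopology EinHat L) (subtopology Ein Cbar) ein_cover"
    using double_covering_map_restrict_preimage[OF double_covering_map_EinHat crooked_closure_subset]
    unfolding L_def Cbar .
  then show ?thesis
    unfolding L Cbar
    using crooked_closure_homeomorphic_klein_bottle crooked_lift_homeomorphic_torus by blast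
qed

end
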